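(* Assume $(\boldsymbol\lambda,\boldsymbol\mu)$ satisfies (H), with the notation of (H). 1) $\{d(\beta_x),d(\beta_y)\}=\{d(\beta_x+h),d(\beta_y-h)\}=\{d,d'\}$, and for every $b\in\{1,\dots,l\}$, $\#\{i:d(\alpha_i)=b\}=\#\{i:d(\beta_i)=b\}$; call this number $r_b$. 2) If $(\boldsymbol\lambda,\boldsymbol\mu)$ satisfies (J1), then $d(\beta_x)=d$ and $d(\beta_y)=d'$. Let $\boldsymbol\beta_{r_d}(\lambda^{(d)})=(g_1,\dots,g_{r_d})$, $\boldsymbol\beta_{r_d}(\mu^{(d)})=(e_1,\dots,e_{r_d})$, $\boldsymbol\beta_{r_{d'}}(\lambda^{(d')})=(g'_1,\dots,g'_{r_{d'}})$, $\boldsymbol\beta_{r_{d'}}(\mu^{(d')})=(e'_1,\dots,e'_{r_{d'}})$ (β-numbers of component $b$ computed with charge $s_b$). Let $b_0,c_0$ be the row indices of the tail and head of $\rho$, and $b'_0,c'_0$ those of $\rho'$. Let $k,k'$ be the integers with $\{k,k'\}=\{\beta_x+h,\beta_y-h\}$, $d(k)=d$, $d(k')=d'$. Then $e_{c_0}=\phi(\beta_x)$, $g_{b_0}=\phi(k)$, $g'_{c'_0}=\phi(k')$, $e'_{b'_0}=\phi(\beta_y)$, and $\hat h=\phi(k)-\phi(\beta_x)=\phi(\beta_y)-\phi(k')$. 3) If $(\boldsymbol\lambda,\boldsymbol\mu)$ satisfies (J2), let $\boldsymbol\beta_{r_d}(\lambda^{(d)})=(g_1,\dots)$, $\boldsymbol\beta_{r_d}(\mu^{(d)})=(e_1,\dots)$,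 $b_0,c_0$ the rows of tail and head of $\rho$, $b'_0,c'_0$ those of $\rho'$. Then $\lambda^{(d)}\lhd\mu^{(d)}$, and $e_{c_0}=\phi(\beta_x)$, $g_{b_0}=\phi(\beta_x+h)$, $g_{c'_0}=\phi(\beta_y-h)$, $e_{b'_0}=\phi(\beta_y)$, $\hat h=\phi(\beta_x+h)-\phi(\beta_x)=\phi(\beta_y)-\phi(\beta_y-h)$.
   Context: Fix $n,l,m\ge1$, $\mathbf s_l=(s_1,\dots,s_l)\in\mathbb Z^l$, $s=\sum s_b$. Partitions are identified with Young diagrams; $\Pi^l_m$ = $l$-tuples of partitions of total size $m$. Ribbon: nonempty connected skew diagram with no $2\times2$ square; head/tail = node with $j-i$ minimal/maximal; length = number of nodes. For a partition $\lambda$ with at most $r$ parts and a charge $t$, $\boldsymbol\beta_r(\lambda)=(\lambda_i+t+1-i)_{1\le i\le r}$; $\boldsymbol\beta(\lambda)=\boldsymbol\beta_{|\lambda|}(\lambda)$ with charge $s$, $B(\lambda)$ its set of entries. Each $k\in\mathbb Z$ is uniquely $k=c(k)+n(d(k)-1)+nl\,m(k)$, $c(k)\in\{1..n\}$, $d(k)\in\{1..l\}$, $m(k)\in\mathbb Z$; $\phi(k)=c(k)+n\,m(k)$ (here $d(\cdot)$ is a function, while $d,d'$ below are indices). $\boldsymbol\lambda\leftrightarrow\lambda$ iff $\{(\lambda^{(b)}_i+s_b+1-i,b)\}=\{(\phi(k),d(k)):k\in\{\lambda_i+s+1-i\}\}$. $\boldsymbol\lambda\prec\boldsymbol\mu$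 iff $\lambda\lhd\mu$ (strict dominance) for $\boldsymbol\lambda\leftrightarrow\lambda,\boldsymbol\mu\leftrightarrow\mu$. (J1): $\boldsymbol\lambda\ne\boldsymbol\mu$ and there are $d\ne d'$ with $\mu^{(d)}\subset\lambda^{(d)}$, $\lambda^{(d')}\subset\mu^{(d')}$, $\lambda^{(b)}=\mu^{(b)}$ otherwise, $\rho:=\lambda^{(d)}/\mu^{(d)}$, $\rho':=\mu^{(d')}/\lambda^{(d')}$ ribbons of common length $\hat h$. (J2): $\boldsymbol\lambda\ne\boldsymbol\mu$, there is $d$ with $\lambda^{(b)}=\mu^{(b)}$ for $b\ne d$, $\rho:=\lambda^{(d)}/(\lambda^{(d)}\cap\mu^{(d)})$, $\rho':=\mu^{(d)}/(\lambda^{(d)}\cap\mu^{(d)})$ ribbons of common length $\hat h$; put $d'=d$. (H): $\boldsymbol\lambda,\boldsymbol\mu\in\Pi^l_m$, $\boldsymbol\lambda\leftrightarrow\lambda$, $\boldsymbol\mu\leftrightarrow\mu$, $\boldsymbol\lambda\prec\boldsymbol\mu$, $|\lambda|=|\mu|=r$, $\#(B(\lambda)\cap B(\mu))=r-2$. Under (H): $\boldsymbol\beta(\lambda)=(\alpha_1,\dots,\alpha_r)$, $\boldsymbol\beta(\mu)=(\beta_1,\dots,\beta_r)$; $\theta=\lambda/(\lambda\cap\mu)$, $\theta'=\mu/(\lambda\cap\mu)$ are ribbons of a common length $h$; $y,y'$ are the rows of tail and head of $\theta'$, $x',x$ those of tail and head of $\theta$; one has $\{\alpha_i:i\ne x',y'\}=\{\beta_j:j\ne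 x,y\}$, $\alpha_{y'}=\beta_y-h$, $\alpha_{x'}=\beta_x+h$; and $(\boldsymbol\lambda,\boldsymbol\mu)$ satisfies (J1) or (J2), with $d,d',\hat h,\rho,\rho'$ as there. *)

theory Defs
  imports Main
begin

text \<open>A partition is a weakly decreasing list of positive naturals; rows are 1-indexed.\<close>

definition is_partition :: "nat list \<Rightarrow> bool" where
  "is_partition la \<longleftrightarrow> sorted_wrt (\<ge>) la \<and> (\<forall>x\<in>set la. 0 < x)"

definition part :: "nat list \<Rightarrow> nat \<Rightarrow> nat" where
  "part la i = (if 1 \<le> i \<and> i \<le> length la then la ! (i - 1) else 0)"

definition psize :: "nat list \<Rightarrow> nat" where
  "psize la = sum_list la"

definition diagram :: "nat list \<Rightarrow> (nat \<times> nat) set" where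
  "diagram la = {(i, j). 1 \<le> i \<and> 1 \<le> j \<and> j \<le> part la i}"

definition content :: "nat \<times> nat \<Rightarrow> int" where
  "content a = int (snd a) - int (fst a)"

definition node_adj :: "nat \<times> nat \<Rightarrow> nat \<times> nat \<Rightarrow> bool" where
  "node_adj a b \<longleftrightarrow>
     (fst a = fst b \<and> (snd a = snd b + 1 \<or> snd b = snd a + 1)) \<or>
     (snd a = snd b \<and> (fst a = fst b + 1 \<or> fst b = fst a + 1))"

definition edge_connected :: "(nat \<times> nat) set \<Rightarrow> bool" where
  "edge_connected S \<longleftrightarrow>
     (\<forall>a\<in>S. \<forall>b\<in>S. (a, b) \<in> {(u, v). u \<in> S \<and> v \<in> S \<and> node_adj u v}\<^sup>*)"

definition no_square :: "(nat \<times> nat) set \<Rightarrow> bool" where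
  "no_square S \<longleftrightarrow>
     \<not> (\<exists>i j. (i, j) \<in> S \<and> (i + 1, j) \<in> S \<and> (i, j + 1) \<in> S \<and> (i + 1, j + 1) \<in> S)"

definition ribbon :: "(nat \<times> nat) set \<Rightarrow> bool" where
  "ribbon S \<longleftrightarrow> S \<noteq> {} \<and> edge_connected S \<and> no_square S"

definition ribbon_head :: "(nat \<times> nat) set \<Rightarrow> nat \<times> nat" where
  "ribbon_head S = (THE a. a \<in> S \<and> (\<forall>b\<in>S. content a \<le> content b))"

definition ribbon_tail :: "(nat \<times> nat) set \<Rightarrow> nat \<times> nat" where
  "ribbon_tail S = (THE a. a \<in> S \<and> (\<forall>b\<in>S. content b \<le> content a))"

definition head_row :: "(nat \<times> nat) set \<Rightarrow> nat" where
  "head_row S = fst (ribbon_head S)"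

definition tail_row :: "(nat \<times> nat) set \<Rightarrow> nat" where
  "tail_row S = fst (ribbon_tail S)"

definition dom_le :: "nat list \<Rightarrow> nat list \<Rightarrow> bool" where
  "dom_le la mu \<longleftrightarrow> psize la = psize mu \<and>
     (\<forall>k. (\<Sum>i=1..k. part la i) \<le> (\<Sum>i=1..k. part mu i))"

definition dom_lt :: "nat list \<Rightarrow> nat list \<Rightarrow> bool" where
  "dom_lt la mu \<longleftrightarrow> dom_le la mu \<and> la \<noteq> mu"

definition beta_vec :: "nat \<Rightarrow> int \<Rightarrow> nat list \<Rightarrow> nat \<Rightarrow> int" where
  "beta_vec r t la i = (if 1 \<le> i \<and> i \<le> r then int (part la i) + t + 1 - int i else 0)"

definition Bset :: "int \<Rightarrow> nat list \<Rightarrow> int set" where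
  "Bset s la = {beta_vec (psize la) s la i | i. 1 \<le> i \<and> i \<le> psize la}"

section \<open>The decomposition k = c(k) + n(d(k)-1) + n l m(k)\<close>

definition m_of :: "nat \<Rightarrow> nat \<Rightarrow> int \<Rightarrow> int" where
  "m_of n l k = (k - 1) div (int n * int l)"

definition d_of :: "nat \<Rightarrow> nat \<Rightarrow> int \<Rightarrow> nat" where
  "d_of n l k = nat (((k - 1) mod (int n * int l)) div int n) + 1"

definition c_of :: "nat \<Rightarrow> nat \<Rightarrow> int \<Rightarrow> int" where
  "c_of n l k = ((k - 1) mod (int n * int l)) mod int n + 1"

definition phi :: "nat \<Rightarrow> nat \<Rightarrow> int \<Rightarrow> int" where
  "phi n l k = c_of n l k + int n * m_of n l k"

definition multipart :: "nat \<Rightarrow> nat \<Rightarrow> (nat \<Rightarrow> nat list) \<Rightarrow> bool" where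
  "multipart l m La \<longleftrightarrow> (\<forall>b. 1 \<le> b \<and> b \<le> l \<longrightarrow> is_partition (La b)) \<and>
     (\<forall>b. \<not> (1 \<le> b \<and> b \<le> l) \<longrightarrow> La b = []) \<and>
     (\<Sum>b=1..l. psize (La b)) = m"

definition total_charge :: "nat \<Rightarrow> (nat \<Rightarrow> int) \<Rightarrow> int" where
  "total_charge l sl = (\<Sum>b=1..l. sl b)"

definition corr :: "nat \<Rightarrow> nat \<Rightarrow> (nat \<Rightarrow> int) \<Rightarrow> (nat \<Rightarrow> nat list) \<Rightarrow> nat list \<Rightarrow> bool" where
  "corr n l sl La la \<longleftrightarrow>
     {(int (part (La b) i) + sl b + 1 - int i, b) | b i. 1 \<le> b \<and> b \<le> l \<and> 1 \<le> i} =
     {(phi n l k, d_of n l k) | k.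
        k \<in> {int (part la i) + total_charge l sl + 1 - int i | i. 1 \<le> i}}"

definition mprec :: "nat \<Rightarrow> nat \<Rightarrow> (nat \<Rightarrow> int) \<Rightarrow> (nat \<Rightarrow> nat list) \<Rightarrow> (nat \<Rightarrow> nat list) \<Rightarrow> bool" where
  "mprec n l sl La Mu \<longleftrightarrow>
     (\<forall>la mu. is_partition la \<longrightarrow> is_partition mu \<longrightarrow>
        corr n l sl La la \<longrightarrow> corr n l sl Mu mu \<longrightarrow> dom_lt la mu)"

definition J1 :: "nat \<Rightarrow> (nat \<Rightarrow> nat list) \<Rightarrow> (nat \<Rightarrow> nat list) \<Rightarrow> nat \<Rightarrow> nat \<Rightarrow> bool" where
  "J1 l La Mu d d' \<longleftrightarrow> La \<noteq> Mu \<and> d \<noteq> d' \<and> 1 \<le> d \<and> d \<le> l \<and> 1 \<le> d' \<and> d' \<le> l \<and>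
     diagram (Mu d) \<subseteq> diagram (La d) \<and> diagram (La d') \<subseteq> diagram (Mu d') \<and>
     (\<forall>b. 1 \<le> b \<and> b \<le> l \<and> b \<noteq> d \<and> b \<noteq> d' \<longrightarrow> La b = Mu b) \<and>
     ribbon (diagram (La d) - diagram (Mu d)) \<and>
     ribbon (diagram (Mu d') - diagram (La d')) \<and>
     card (diagram (La d) - diagram (Mu d)) = card (diagram (Mu d') - diagram (La d'))"

definition J2 :: "nat \<Rightarrow> (nat \<Rightarrow> nat list) \<Rightarrow> (nat \<Rightarrow> nat list) \<Rightarrow> nat \<Rightarrow> bool" where
  "J2 l La Mu d \<longleftrightarrow> La \<noteq> Mu \<and> 1 \<le> d \<and> d \<le> l \<and>
     (\<forall>b. 1 \<le> b \<and> b \<le> l \<and> b \<noteq> d \<longrightarrow> La b = Mu b) \<and>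
     ribbon (diagram (La d) - (diagram (La d) \<inter> diagram (Mu d))) \<and>
     ribbon (diagram (Mu d) - (diagram (La d) \<inter> diagram (Mu d))) \<and>
     card (diagram (La d) - (diagram (La d) \<inter> diagram (Mu d))) =
       card (diagram (Mu d) - (diagram (La d) \<inter> diagram (Mu d)))"

definition Hcond :: "nat \<Rightarrow> nat \<Rightarrow> nat \<Rightarrow> (nat \<Rightarrow> int) \<Rightarrow> (nat \<Rightarrow> nat list) \<Rightarrow> (nat \<Rightarrow> nat list)
    \<Rightarrow> nat list \<Rightarrow> nat list \<Rightarrow> nat \<Rightarrow> bool" where
  "Hcond n l m sl La Mu la mu r \<longleftrightarrow>
     multipart l m La \<and> multipart l m Mu \<and> is_partition la \<and> is_partition mu \<and>
     corr n l sl La la \<and> corr n l sl Mu mu \<and> mprec n l sl La Mu \<and>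
     psize la = r \<and> psize mu = r \<and>
     card (Bset (total_charge l sl) la \<inter> Bset (total_charge l sl) mu) = r - 2"

end

theory Submission
  imports Defs
begin

(* A partition is read on the abacus as the strictly decreasing sequence of its beta numbers
  (beads). Under (H) the abaci of la and mu differ in exactly two beads: mu has beads at
  u = beta_x and v = beta_y where la has them at u + h and v - h, and la \<lhd> mu forces
  u < u + h < v - h < v. Via corr, the beads of la on runner b, relabelled by phi (which is
  strictly increasing on each runner), are the beads of La b. Counting beads above each level
  turns the two-bead exchange into a relation between the bead counts of La b and Mu b, and
  moving a single bead up from p to q adds a rim hook of length q - p whose tail and head lie in
  the rows of the beads at q and p. In case (J1) runners d and d' each carry one moved bead; in
  case (J2) both moves happen on runner d, where the two hooks over the meet of La d and Mu d
  occupy separated rows, which yields La d \<lhd> Mu d. *)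

section \<open>Abacus: beta sequences and bead counts\<close>

definition beta_seq :: "int \<Rightarrow> (nat \<Rightarrow> nat) \<Rightarrow> nat \<Rightarrow> int" where
  "beta_seq t P i = int (P i) + t + 1 - int i"

definition partition_fun :: "(nat \<Rightarrow> nat) \<Rightarrow> bool" where
  "partition_fun P \<longleftrightarrow> (\<forall>i j. 1 \<le> i \<longrightarrow> i \<le> j \<longrightarrow> P j \<le> P i) \<and> (\<exists>N. \<forall>i>N. P i = 0)"

definition beads_above :: "(nat \<Rightarrow> int) \<Rightarrow> int \<Rightarrow> nat" where
  "beads_above f w = card {i. 1 \<le> i \<and> w < f i}"

lemma strict_antimono_from1D:
  fixes f :: "nat \<Rightarrow> 'a::order"
  shows "strict_antimono_on {1..} f \<Longrightarrow> 1 \<le> i \<Longrightarrow> i < j \<Longrightarrow> f j < f i"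
  by (rule monotone_onD[of "{1..}" "(<)" "\<lambda>x y. y < x" f]) auto

lemma strict_antimono_from1_le_iff:
  fixes f :: "nat \<Rightarrow> 'a::linorder"
  assumes "strict_antimono_on {1..} f" "1 \<le> i" "1 \<le> j"
  shows "f i \<le> f j \<longleftrightarrow> j \<le> i"
proof (cases i j rule: linorder_cases)
  case less
  then show ?thesis using strict_antimono_from1D[OF assms(1,2) less] by simp
next
  case greater
  then show ?thesis using strict_antimono_from1D[OF assms(1,3) greater] by simp
qed simp

lemma strict_antimono_from1_inj:
  fixes f :: "nat \<Rightarrow> 'a::linorder"
  assumes "strict_antimono_on {1..} f" shows "inj_on f {1..}"
  unfolding inj_on_def by (metis atLeast_iff order.antisym order_refl strict_antimono_from1_le_iff[OF assms])

lemma strict_antimono_beta_seq: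
  assumes "partition_fun P" shows "strict_antimono_on {1..} (beta_seq t P)"
proof (rule monotone_onI)
  fix i j :: nat assume "i \<in> {1..}" "i < j"
  then have "P j \<le> P i" using assms unfolding partition_fun_def by auto
  then show "beta_seq t P j < beta_seq t P i" using \<open>i < j\<close> by (simp add: beta_seq_def)
qed

lemma beta_vec_eq_beta_seq: "1 \<le> i \<Longrightarrow> i \<le> R \<Longrightarrow> beta_vec R t la i = beta_seq t (part la) i"
  by (simp add: beta_vec_def beta_seq_def)

context
  fixes f :: "nat \<Rightarrow> int"
  assumes f: "strict_antimono_on {1..} f"
begin

lemma beads_above_set: "{i. 1 \<le> i \<and> w < f i} = {1..beads_above f w}"
proof -
  define S where "S = {i. 1 \<le> i \<and> w < f i}"
  have bound: "f i \<le> f 1 - int i + 1" if "1 \<le> i" for i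
    using that
  proof (induction i rule: dec_induct)
    case (step k)
    then show ?case using strict_antimono_from1D[OF f, of k "Suc k"] by simp
  qed simp
  have "S \<subseteq> {1..nat (f 1 - w)}"
  proof
    fix i assume "i \<in> S"
    then have "1 \<le> i" "w < f i" by (simp_all add: S_def)
    with bound[of i] show "i \<in> {1..nat (f 1 - w)}" by simp
  qed
  then have fin: "finite S"
    by (rule finite_subset) simp
  have down: "j \<in> S" if "k \<in> S" "1 \<le> j" "j \<le> k" for j k
    using that strict_antimono_from1_le_iff[OF f, of k j] by (auto simp: S_def)
  have "S = {1..card S}"
  proof (cases "S = {}")
    case False
    then have max: "Max S \<in> S" using fin by simp
    have "S = {1..Max S}"
    proof (intro set_eqI iffI)
      fix i assume "i \<in> S"
      then show "i \<in> {1..Max S}" using Max_ge[OF fin] by (simp add: S_def)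
    next
      fix i assume "i \<in> {1..Max S}"
      then show "i \<in> S" using down[OF max] by simp
    qed
    then show ?thesis by (metis card_atLeastAtMost diff_Suc_1)
  qed simp
  then show ?thesis by (simp add: S_def beads_above_def)
qed

lemma beads_above_iff:
  assumes "1 \<le> i" shows "w < f i \<longleftrightarrow> i \<le> beads_above f w"
proof -
  have "i \<in> {i. 1 \<le> i \<and> w < f i} \<longleftrightarrow> i \<in> {1..beads_above f w}"
    by (simp only: beads_above_set)
  then show ?thesis using assms by simp
qed

lemma beads_above_antimono:
  assumes "w \<le> w'" shows "beads_above f w' \<le> beads_above f w"
proof (cases "beads_above f w' = 0")
  case False
  then have "w' < f (beads_above f w')" using beads_above_iff[of "beads_above f w'" w'] by simp
  then show ?thesis using assms beads_above_iff[of "beads_above f w'" w] False by simp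
qed simp

lemma beads_above_pred_le: "beads_above f (w - 1) \<le> beads_above f w + 1"
proof (rule ccontr)
  assume "\<not> ?thesis"
  then obtain i where i: "i = beads_above f (w - 1)" "beads_above f w + 2 \<le> i" by auto
  then have "w - 1 < f i" using beads_above_iff[of i "w - 1"] by simp
  moreover have "f i < f (i - 1)" using strict_antimono_from1D[OF f, of "i - 1" i] i by simp
  ultimately have "i - 1 \<le> beads_above f w" using beads_above_iff[of "i - 1" w] i by simp
  then show False using i by simp
qed

lemma beads_above_at:
  assumes "1 \<le> i"
  shows "beads_above f (f i) = i - 1" "beads_above f (f i - 1) = i"
proof -
  have "{j. 1 \<le> j \<and> f i < f j} = {1..i - 1}"
  proof (intro set_eqI iffI)
    fix j assume "j \<in> {j. 1 \<le> j \<and> f i < f j}"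
    then show "j \<in> {1..i - 1}" using strict_antimono_from1_le_iff[OF f assms, of j] by (cases "j = i") auto
  next
    fix j assume "j \<in> {1..i - 1}"
    then show "j \<in> {j. 1 \<le> j \<and> f i < f j}" using strict_antimono_from1D[OF f, of j i] by auto
  qed
  then show "beads_above f (f i) = i - 1" by (simp add: beads_above_def)
  have "{j. 1 \<le> j \<and> f i - 1 < f j} = {j. 1 \<le> j \<and> f i \<le> f j}" by auto
  also have "\<dots> = {1..i}"
    using strict_antimono_from1_le_iff[OF f assms] by auto
  finally show "beads_above f (f i - 1) = i" by (simp add: beads_above_def)
qed

lemma beads_above_image: "beads_above f w = card {y \<in> f ` {1..}. w < y}"
proof -
  have "{y \<in> f ` {1..}. w < y} = f ` {i. 1 \<le> i \<and> w < f i}" by auto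
  moreover have "inj_on f {i. 1 \<le> i \<and> w < f i}"
    using strict_antimono_from1_inj[OF f] by (rule inj_on_subset) auto
  ultimately show ?thesis by (simp add: beads_above_def card_image)
qed

lemma finite_beads_above: "finite {y \<in> f ` {1..}. w < y}"
proof -
  have "{y \<in> f ` {1..}. w < y} = f ` {i. 1 \<le> i \<and> w < f i}" by auto
  then show ?thesis unfolding beads_above_set by simp
qed

end

lemma beads_above_beta_seq_low:
  assumes N: "\<forall>i>N. P i = 0" and w: "w \<le> t - int N"
  shows "beads_above (beta_seq t P) w = nat (t - w)"
proof -
  have "{i. 1 \<le> i \<and> w < beta_seq t P i} = {1..nat (t - w)}"
  proof (intro set_eqI iffI)
    fix i assume "i \<in> {1..nat (t - w)}"
    then show "i \<in> {i. 1 \<le> i \<and> w < beta_seq t P i}" by (auto simp: beta_seq_def)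
  next
    fix i assume "i \<in> {i. 1 \<le> i \<and> w < beta_seq t P i}"
    then show "i \<in> {1..nat (t - w)}"
      using N w by (cases "i \<le> N") (auto simp: beta_seq_def)
  qed
  then show ?thesis by (simp add: beads_above_def)
qed

section \<open>Moving one bead adds a rim hook\<close>

definition diagram_fun :: "(nat \<Rightarrow> nat) \<Rightarrow> (nat \<times> nat) set" where
  "diagram_fun P = {(i, j). 1 \<le> i \<and> 1 \<le> j \<and> j \<le> P i}"

lemma diagram_eq_diagram_fun: "diagram la = diagram_fun (part la)"
  unfolding diagram_def diagram_fun_def by simp

lemma diagram_fun_Int: "diagram_fun P \<inter> diagram_fun Q = diagram_fun (\<lambda>i. min (P i) (Q i))"
  unfolding diagram_fun_def by auto

lemma int_eq_by_thresholds:
  fixes x y lo hi :: int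
  assumes "lo \<le> x" "lo \<le> y" "x \<le> hi" "y \<le> hi"
    and "\<And>w. lo \<le> w \<Longrightarrow> w < hi \<Longrightarrow> w < x \<longleftrightarrow> w < y"
  shows "x = y"
  using assms(5)[of "min x y"] assms(1-4) by (cases x y rule: linorder_cases) auto

text \<open>The counts say that \<open>fP\<close> arises from \<open>fN\<close> by moving the bead at \<open>p\<close> (row \<open>c\<close>) up to \<open>q\<close>
  (row \<open>b\<close>); the beads in between slide down by one row.\<close>

lemma bead_move_positions:
  fixes fP fN :: "nat \<Rightarrow> int"
  assumes P: "strict_antimono_on {1..} fP" and N: "strict_antimono_on {1..} fN"
    and move: "\<And>w. beads_above fP w = beads_above fN w + (if p \<le> w \<and> w < q then 1 else 0)"
    and pq: "p < q"
  defines "b \<equiv> beads_above fP q + 1" and "c \<equiv> beads_above fN p + 1"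
  shows "fP b = q" "fN c = p" "b \<le> c" "fN b < q"
    "\<And>i. 1 \<le> i \<Longrightarrow> i < b \<or> c < i \<Longrightarrow> fP i = fN i"
    "\<And>i. b < i \<Longrightarrow> i \<le> c \<Longrightarrow> fP i = fN (i - 1)"
proof -
  note iffP = beads_above_iff[OF P] and iffN = beads_above_iff[OF N]
  have a1: "beads_above fP q = beads_above fN q" using move[of q] by simp
  have a2: "beads_above fP (q - 1) = beads_above fN (q - 1) + 1" using move[of "q - 1"] pq by simp
  have "beads_above fN q \<le> beads_above fN (q - 1)" by (rule beads_above_antimono[OF N]) simp
  moreover have "beads_above fP (q - 1) \<le> beads_above fP q + 1" by (rule beads_above_pred_le[OF P])
  ultimately have bq1: "beads_above fP (q - 1) = b" and nq: "beads_above fN (q - 1) = beads_above fN q"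
    using a1 a2 b_def by auto
  show fb: "fP b = q"
    using iffP[of b "q - 1"] iffP[of b q] bq1 b_def by auto
  have c1: "beads_above fP p = c" using move[of p] pq c_def by simp
  have c2: "beads_above fP (p - 1) = beads_above fN (p - 1)" using move[of "p - 1"] by simp
  have "beads_above fN (p - 1) \<le> beads_above fN p + 1" by (rule beads_above_pred_le[OF N])
  moreover have "beads_above fP p \<le> beads_above fP (p - 1)" by (rule beads_above_antimono[OF P]) simp
  ultimately have cp1: "beads_above fN (p - 1) = c" "beads_above fP (p - 1) = c"
    using c1 c2 c_def by auto
  show fc: "fN c = p"
    using iffN[of c "p - 1"] iffN[of c p] cp1 c_def by auto
  have "beads_above fN q \<le> beads_above fN p" by (rule beads_above_antimono[OF N]) (use pq in simp)
  then show "b \<le> c" using a1 b_def c_def by simp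
  have "\<not> q < fN b" using iffN[of b q] a1 b_def by simp
  moreover have "fN b \<noteq> q"
    using beads_above_at(2)[OF N, of b] nq a1 b_def by auto
  ultimately show "fN b < q" by simp
  show "fP i = fN i" if i: "1 \<le> i" "i < b \<or> c < i" for i
    using i(2)
  proof
    assume ib: "i < b"
    have x: "q < fP i" using iffP[OF i(1), of q] ib b_def by simp
    have y: "q < fN i" using iffN[OF i(1), of q] ib b_def a1 by simp
    show ?thesis
    proof (rule int_eq_by_thresholds[of q _ _ "max (fP i) (fN i)"])
      fix w assume "q \<le> w" "w < max (fP i) (fN i)"
      then have "beads_above fP w = beads_above fN w" using move[of w] by simp
      then show "w < fP i \<longleftrightarrow> w < fN i" using iffP[OF i(1), of w] iffN[OF i(1), of w] by simp
    qed (use x y in auto)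
  next
    assume ic: "c < i"
    have x: "fP i \<le> p - 1" using iffP[OF i(1), of "p - 1"] ic cp1 by simp
    have y: "fN i \<le> p - 1" using iffN[OF i(1), of "p - 1"] ic cp1 by simp
    show ?thesis
    proof (rule int_eq_by_thresholds[of "min (fP i) (fN i)" _ _ p])
      fix w assume "min (fP i) (fN i) \<le> w" "w < p"
      then have "beads_above fP w = beads_above fN w" using move[of w] by simp
      then show "w < fP i \<longleftrightarrow> w < fN i" using iffP[OF i(1), of w] iffN[OF i(1), of w] by simp
    qed (use x y in auto)
  qed
  show "fP i = fN (i - 1)" if i: "b < i" "i \<le> c" for i
  proof -
    have i1: "1 \<le> i" "1 \<le> i - 1" using i b_def by auto
    have x1: "p < fP i" using iffP[OF i1(1), of p] i c1 by simp
    have x2: "fP i \<le> q - 1" using iffP[OF i1(1), of "q - 1"] i bq1 by simp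
    have y1: "p < fN (i - 1)" using iffN[OF i1(2), of p] i c_def by simp
    have "\<not> i - 1 \<le> beads_above fN q" using i b_def a1 by simp
    then have y2: "fN (i - 1) \<le> q" using iffN[OF i1(2), of q] by simp
    show ?thesis
    proof (rule int_eq_by_thresholds[of p _ _ q])
      fix w assume "p \<le> w" "w < q"
      then have "beads_above fP w = beads_above fN w + 1" using move[of w] by simp
      then show "w < fP i \<longleftrightarrow> w < fN (i - 1)"
        using iffP[OF i1(1), of w] iffN[OF i1(2), of w] i1 by auto
    qed (use x1 x2 y1 y2 in auto)
  qed
qed

lemma bead_move_sum_diff:
  fixes fP fN :: "nat \<Rightarrow> int"
  assumes "fP b = q" "fN c = p" "1 \<le> b" "b \<le> c"
    "\<And>i. 1 \<le> i \<Longrightarrow> i < b \<or> c < i \<Longrightarrow> fP i = fN i"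
    "\<And>i. b < i \<Longrightarrow> i \<le> c \<Longrightarrow> fP i = fN (i - 1)"
  shows "(\<Sum>i=1..k. fP i - fN i) = (if k < b then 0 else if k \<le> c then q - fN k else q - p)"
proof (induction k)
  case (Suc k)
  have s: "(\<Sum>i=1..Suc k. fP i - fN i) = (\<Sum>i=1..k. fP i - fN i) + (fP (Suc k) - fN (Suc k))"
    by simp
  consider "Suc k < b" | "Suc k = b" | "b < Suc k \<and> Suc k \<le> c" | "c < Suc k" by linarith
  then show ?case
  proof cases
    case 1 then show ?thesis using s Suc assms(5)[of "Suc k"] by simp
  next
    case 2 then show ?thesis using s Suc assms by auto
  next
    case 3 then show ?thesis using s Suc assms(6)[of "Suc k"] by auto
  next
    case 4
    then show ?thesis using s Suc assms(5)[of "Suc k"] assms(2) assms(4) by (cases "k = c") auto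
  qed
qed (use assms in simp)

lemma bead_move_rows:
  assumes P: "partition_fun P" and N: "partition_fun Nn"
    and move: "\<And>w. beads_above (beta_seq t P) w
                  = beads_above (beta_seq t Nn) w + (if p \<le> w \<and> w < q then 1 else 0)"
    and pq: "p < q"
  defines "b \<equiv> beads_above (beta_seq t P) q + 1" and "c \<equiv> beads_above (beta_seq t Nn) p + 1"
  shows "\<And>i. b \<le> i \<Longrightarrow> i \<le> c \<Longrightarrow> Nn i < P i" "\<And>i. 1 \<le> i \<Longrightarrow> i < b \<or> c < i \<Longrightarrow> P i = Nn i"
proof -
  let ?fP = "beta_seq t P" and ?fN = "beta_seq t Nn"
  have sN: "strict_antimono_on {1..} ?fN" by (rule strict_antimono_beta_seq[OF N])
  note L = bead_move_positions[OF strict_antimono_beta_seq[OF P] sN move pq, folded b_def c_def]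
  show "Nn i < P i" if "b \<le> i" "i \<le> c" for i
  proof (cases "i = b")
    case True then show ?thesis using L(1,4) unfolding beta_seq_def by simp
  next
    case False
    then have "?fP i = ?fN (i - 1)" using L(6) that by simp
    moreover have "?fN i < ?fN (i - 1)"
      using strict_antimono_from1D[OF sN, of "i - 1" i] that False unfolding b_def by simp
    ultimately show ?thesis unfolding beta_seq_def by simp
  qed
  show "P i = Nn i" if "1 \<le> i" "i < b \<or> c < i" for i
    using L(5)[OF that] unfolding beta_seq_def by simp
qed

lemma bead_move_skew_diagram:
  assumes P: "partition_fun P" and N: "partition_fun Nn"
    and move: "\<And>w. beads_above (beta_seq t P) w
                  = beads_above (beta_seq t Nn) w + (if p \<le> w \<and> w < q then 1 else 0)"
    and pq: "p < q"
  defines "S \<equiv> diagram_fun P - diagram_fun Nn"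
    and "b \<equiv> beads_above (beta_seq t P) q + 1" and "c \<equiv> beads_above (beta_seq t Nn) p + 1"
  shows "tail_row S = b" "head_row S = c" "int (card S) = q - p"
    "\<And>i j. (i, j) \<in> S \<Longrightarrow> b \<le> i \<and> i \<le> c"
proof -
  let ?fP = "beta_seq t P" and ?fN = "beta_seq t Nn"
  have sP: "strict_antimono_on {1..} ?fP" by (rule strict_antimono_beta_seq[OF P])
  have sN: "strict_antimono_on {1..} ?fN" by (rule strict_antimono_beta_seq[OF N])
  note L = bead_move_positions[OF sP sN move pq, folded b_def c_def]
  note strict = bead_move_rows(1)[OF P N move pq, folded b_def c_def]
    and eqo = bead_move_rows(2)[OF P N move pq, folded b_def c_def]
  have b1: "1 \<le> b" using b_def by simp
  have le: "Nn i \<le> P i" if "1 \<le> i" for i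
    by (cases "b \<le> i \<and> i \<le> c") (use strict[of i] eqo[OF that] in auto)
  have memS: "(i, j) \<in> S \<longleftrightarrow> 1 \<le> i \<and> 1 \<le> j \<and> Nn i < j \<and> j \<le> P i" for i j
    unfolding S_def diagram_fun_def by auto
  show rows: "b \<le> i \<and> i \<le> c" if "(i, j) \<in> S" for i j
    using that eqo[of i] unfolding memS by fastforce
  have tail: "content (i, j) \<le> content (b, P b) \<and> (content (i, j) = content (b, P b) \<longrightarrow> (i, j) = (b, P b))"
    if "(i, j) \<in> S" for i j
  proof (cases "i = b")
    case False
    then have "?fP i < ?fP b" using strict_antimono_from1D[OF sP b1] rows[OF that] by simp
    then show ?thesis using that memS by (simp add: content_def beta_seq_def)
  qed (use that memS in \<open>simp add: content_def\<close>)
  have head: "content (c, Nn c + 1) \<le> content (i, j) \<and>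
      (content (i, j) = content (c, Nn c + 1) \<longrightarrow> (i, j) = (c, Nn c + 1))"
    if "(i, j) \<in> S" for i j
  proof (cases "i = c")
    case False
    then have "?fN c < ?fN i" using strict_antimono_from1D[OF sN] rows[OF that] b1 by simp
    then show ?thesis using that memS by (simp add: content_def beta_seq_def)
  qed (use that memS in \<open>simp add: content_def\<close>)
  have "(b, P b) \<in> S" "(c, Nn c + 1) \<in> S" using strict[of b] strict[of c] L(3) b1 memS by auto
  then have "ribbon_tail S = (b, P b)" "ribbon_head S = (c, Nn c + 1)"
    unfolding ribbon_tail_def ribbon_head_def using tail head
    by (auto intro!: the_equality) (meson order.antisym)+
  then show "tail_row S = b" "head_row S = c" by (simp_all add: tail_row_def head_row_def)
  have "S = Sigma {1..c} (\<lambda>i. {Suc (Nn i)..P i})"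
  proof (rule set_eqI)
    fix a :: "nat \<times> nat"
    obtain i j where a: "a = (i, j)" by (cases a)
    show "a \<in> S \<longleftrightarrow> a \<in> Sigma {1..c} (\<lambda>i. {Suc (Nn i)..P i})"
      unfolding a using rows[of i j] memS[of i j] by auto
  qed
  then have "card S = (\<Sum>i=1..c. card {Suc (Nn i)..P i})"
    by (simp add: card_SigmaI)
  then have "int (card S) = (\<Sum>i=1..c. int (P i - Nn i))" by simp
  also have "\<dots> = (\<Sum>i=1..c. ?fP i - ?fN i)"
    by (rule sum.cong) (use le in \<open>auto simp: beta_seq_def\<close>)
  also have "\<dots> = q - p"
    using bead_move_sum_diff[of ?fP b q ?fN c p c] L b1 by simp
  finally show "int (card S) = q - p" .
qed

section \<open>Partitions, diagrams and dominance\<close>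

lemma is_partition_Nil: "is_partition []"
  unfolding is_partition_def by simp

lemma part_eq_0: "length la < i \<Longrightarrow> part la i = 0"
  unfolding part_def by auto

lemma partition_fun_part:
  assumes "is_partition la" shows "partition_fun (part la)"
  unfolding partition_fun_def
proof (intro conjI allI impI)
  fix i j :: nat assume ij: "1 \<le> i" "i \<le> j"
  show "part la j \<le> part la i"
  proof (cases "j \<le> length la \<and> i < j")
    case True
    then have "i - 1 < j - 1" "j - 1 < length la" using ij by auto
    then have "la ! (j - 1) \<le> la ! (i - 1)"
      using assms sorted_wrt_nth_less[of "(\<ge>)" la "i - 1" "j - 1"] by (simp add: is_partition_def)
    then show ?thesis using True ij by (simp add: part_def)
  qed (use ij in \<open>auto simp: part_def\<close>)
qed (use part_eq_0 in blast)

lemma partition_fun_min: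
  assumes "partition_fun P" "partition_fun Q" shows "partition_fun (\<lambda>i. min (P i) (Q i))"
proof -
  obtain N where "\<forall>i>N. P i = 0" using assms(1) unfolding partition_fun_def by blast
  then have "\<forall>i>N. min (P i) (Q i) = 0" by simp
  moreover have "\<forall>i j. 1 \<le> i \<longrightarrow> i \<le> j \<longrightarrow> min (P j) (Q j) \<le> min (P i) (Q i)"
    using assms unfolding partition_fun_def min.bounded_iff min_le_iff_disj by blast
  ultimately show ?thesis unfolding partition_fun_def by blast
qed

lemma length_le_psize: "is_partition la \<Longrightarrow> length la \<le> psize la"
  unfolding is_partition_def psize_def
  by (induction la) (auto simp: Suc_le_eq)

lemma diagram_rows: "(i, j) \<in> diagram la \<Longrightarrow> 1 \<le> i \<and> i \<le> length la"
  unfolding diagram_def part_def by (auto split: if_splits)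

lemma part_le_psize: "part la i \<le> psize la"
  unfolding part_def psize_def by (auto intro: member_le_sum_list)

lemma finite_diagram: "finite (diagram la)"
proof (rule finite_subset)
  show "diagram la \<subseteq> {1..length la} \<times> {0..psize la}"
  proof
    fix a assume "a \<in> diagram la"
    then show "a \<in> {1..length la} \<times> {0..psize la}"
      using diagram_rows[of "fst a" "snd a" la] part_le_psize[of la "fst a"]
      by (auto simp: diagram_def)
  qed
qed simp

lemma sum_part_eq_card_rows: "(\<Sum>i=1..k. part la i) = card {a \<in> diagram la. fst a \<le> k}"
proof -
  have "{a \<in> diagram la. fst a \<le> k} = Sigma {1..k} (\<lambda>i. {1..part la i})"
    unfolding diagram_def by auto
  then show ?thesis by (simp add: card_SigmaI)
qed

lemma card_diagram: "card (diagram la) = psize la"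
proof -
  have "psize la = (\<Sum>i<length la. la ! i)"
    unfolding psize_def by (simp add: sum_list_sum_nth atLeast0LessThan)
  also have "\<dots> = (\<Sum>i=1..length la. part la i)"
    by (rule sum.reindex_bij_witness[of _ "\<lambda>i. i - 1" "\<lambda>i. i + 1"]) (auto simp: part_def)
  also have "\<dots> = card {a \<in> diagram la. fst a \<le> length la}"
    by (rule sum_part_eq_card_rows)
  also have "{a \<in> diagram la. fst a \<le> length la} = diagram la"
    using diagram_rows by fastforce
  finally show ?thesis by simp
qed

lemma dom_le_if_rows_separated:
  assumes below: "\<And>i j. (i, j) \<in> diagram la - diagram mu \<Longrightarrow> c < i"
    and above: "\<And>i j. (i, j) \<in> diagram mu - diagram la \<Longrightarrow> i \<le> c"
    and card: "card (diagram la - diagram mu) = card (diagram mu - diagram la)"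
  shows "dom_le la mu"
proof -
  let ?rows = "\<lambda>D k. {a \<in> D. fst a \<le> k}"
  have split: "card (?rows (diagram A) k)
      = card (?rows (diagram A \<inter> diagram B) k) + card (?rows (diagram A - diagram B) k)" for A B k
  proof -
    have "card (?rows (diagram A) k)
        = card (?rows (diagram A \<inter> diagram B) k \<union> ?rows (diagram A - diagram B) k)"
      by (rule arg_cong[where f = card]) blast
    also have "\<dots> = card (?rows (diagram A \<inter> diagram B) k) + card (?rows (diagram A - diagram B) k)"
      by (rule card_Un_disjoint) (use finite_diagram[of A] in auto)
    finally show ?thesis .
  qed
  have "(\<Sum>i=1..k. part la i) \<le> (\<Sum>i=1..k. part mu i)" for k
  proof (cases "k \<le> c")
    case True
    then have empty: "?rows (diagram la - diagram mu) k = {}" using below by fastforce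
    have "card (?rows (diagram la) k) \<le> card (?rows (diagram mu) k)"
      using split[of la k mu] split[of mu k la] unfolding empty by (simp add: Int_commute)
    then show ?thesis unfolding sum_part_eq_card_rows .
  next
    case False
    then have all: "?rows (diagram mu - diagram la) k = diagram mu - diagram la" using above by fastforce
    have "card (?rows (diagram la - diagram mu) k) \<le> card (diagram la - diagram mu)"
      using finite_diagram[of la] by (intro card_mono) auto
    then have "card (?rows (diagram la) k) \<le> card (?rows (diagram mu) k)"
      using split[of la k mu] split[of mu k la] card unfolding all by (simp add: Int_commute)
    then show ?thesis unfolding sum_part_eq_card_rows .
  qed
  moreover have "psize la = psize mu"
  proof -
    have "card (diagram A) = card (diagram A \<inter> diagram B) + card (diagram A - diagram B)" for A B
      using finite_diagram[of A] by (metis card_Int_Diff finite_Int finite_Diff)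
    then show ?thesis using card by (metis card_diagram Int_commute)
  qed
  ultimately show ?thesis unfolding dom_le_def by blast
qed

lemma inj_on_content_skew:
  assumes P: "partition_fun P" and Q: "partition_fun Q"
    and square: "no_square (diagram_fun P - diagram_fun Q)"
  shows "inj_on content (diagram_fun P - diagram_fun Q)"
proof (rule inj_onI)
  let ?S = "diagram_fun P - diagram_fun Q"
  have memS: "(i, j) \<in> ?S \<longleftrightarrow> 1 \<le> i \<and> 1 \<le> j \<and> Q i < j \<and> j \<le> P i" for i j
    unfolding diagram_fun_def by auto
  have anti: "P j \<le> P i" "Q j \<le> Q i" if "1 \<le> i" "i \<le> j" for i j
    using P Q that unfolding partition_fun_def by auto
  have no_diagonal: False
    if "(i, j) \<in> ?S" "(i', j') \<in> ?S" "i < i'" "int j' - int i' = int j - int i" for i j i' j'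
  proof -
    have h: "1 \<le> i" "1 \<le> j" "Q i < j" "j \<le> P i" "j' \<le> P i'" using that memS by auto
    have "j < j'" using that by linarith
    have "P i' \<le> P (i + 1)" "Q (i + 1) \<le> Q i" using anti[of "i + 1" i'] anti[of i "i + 1"] h that by auto
    then have "(i, j) \<in> ?S \<and> (i + 1, j) \<in> ?S \<and> (i, j + 1) \<in> ?S \<and> (i + 1, j + 1) \<in> ?S"
      using h \<open>j < j'\<close> anti[of i "i + 1"] anti[of i i'] that unfolding memS by auto
    then show False using square unfolding no_square_def by blast
  qed
  fix a a' assume that: "a \<in> ?S" "a' \<in> ?S" "content a = content a'"
  show "a = a'"
  proof (rule ccontr)
    assume ne: "a \<noteq> a'"
    obtain i j i' j' where a: "a = (i, j)" "a' = (i', j')" by (cases a, cases a')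
    have "i \<noteq> i'" using ne a that(3) by (auto simp: content_def)
    then have "i < i' \<or> i' < i" by arith
    moreover have m: "(i, j) \<in> ?S" "(i', j') \<in> ?S" using that a by auto
    moreover have "int j' - int i' = int j - int i" using that(3) a by (simp add: content_def)
    ultimately show False using no_diagonal[OF m(1) m(2)] no_diagonal[OF m(2) m(1)] by auto
  qed
qed

lemma ribbon_head_tail_mem:
  assumes P: "partition_fun P" and Q: "partition_fun Q"
    and rib: "ribbon (diagram_fun P - diagram_fun Q)" and fin: "finite (diagram_fun P - diagram_fun Q)"
  shows "ribbon_head (diagram_fun P - diagram_fun Q) \<in> diagram_fun P - diagram_fun Q"
    "ribbon_tail (diagram_fun P - diagram_fun Q) \<in> diagram_fun P - diagram_fun Q"
proof -
  let ?S = "diagram_fun P - diagram_fun Q"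
  have inj: "inj_on content ?S"
    using inj_on_content_skew[OF P Q] rib unfolding ribbon_def by blast
  have ne: "?S \<noteq> {}" using rib unfolding ribbon_def by simp
  define mn where "mn = Min (content ` ?S)"
  define mx where "mx = Max (content ` ?S)"
  have "mn \<in> content ` ?S" "mx \<in> content ` ?S" using fin ne unfolding mn_def mx_def by auto
  then obtain a1 a2 where a1: "a1 \<in> ?S" "content a1 = mn" and a2: "a2 \<in> ?S" "content a2 = mx" by blast
  have min: "\<forall>b\<in>?S. content a1 \<le> content b" using a1 fin unfolding mn_def by simp
  have "ribbon_head ?S = a1" unfolding ribbon_head_def
  proof (rule the_equality)
    fix a assume "a \<in> ?S \<and> (\<forall>b\<in>?S. content a \<le> content b)"
    then show "a = a1" using inj_onD[OF inj, of a a1] a1 min by force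
  qed (use a1 min in auto)
  then show "ribbon_head ?S \<in> ?S" using a1 by simp
  have max: "\<forall>b\<in>?S. content b \<le> content a2" using a2 fin unfolding mx_def by simp
  have "ribbon_tail ?S = a2" unfolding ribbon_tail_def
  proof (rule the_equality)
    fix a assume "a \<in> ?S \<and> (\<forall>b\<in>?S. content b \<le> content a)"
    then show "a = a2" using inj_onD[OF inj, of a a2] a2 max by force
  qed (use a2 max in auto)
  then show "ribbon_tail ?S \<in> ?S" using a2 by simp
qed

section \<open>Exchanging beads\<close>

lemma beta_seq_min: "beta_seq t (\<lambda>i. min (P i) (Q i)) = (\<lambda>i. min (beta_seq t P i) (beta_seq t Q i))"
  by (rule ext) (auto simp: beta_seq_def min_def)

lemma beads_above_min:
  assumes f: "strict_antimono_on {1..} f" and g: "strict_antimono_on {1..} g"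
  shows "beads_above (\<lambda>i. min (f i) (g i)) w = min (beads_above f w) (beads_above g w)"
proof -
  have "{i. 1 \<le> i \<and> w < min (f i) (g i)} = {i. 1 \<le> i \<and> w < f i} \<inter> {i. 1 \<le> i \<and> w < g i}"
    by auto
  also have "\<dots> = {1..min (beads_above f w) (beads_above g w)}"
    unfolding beads_above_set[OF f] beads_above_set[OF g] by auto
  finally show ?thesis by (simp add: beads_above_def[of "\<lambda>i. min (f i) (g i)"])
qed

lemma beads_above_mono_diagram:
  assumes sub: "diagram A \<subseteq> diagram B" and B: "is_partition B"
  shows "beads_above (beta_seq t (part A)) w \<le> beads_above (beta_seq t (part B)) w"
proof -
  have "part A i \<le> part B i" if "1 \<le> i" for i
  proof (cases "part A i = 0")
    case False
    then have "(i, part A i) \<in> diagram A" using that unfolding diagram_def by auto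
    then show ?thesis using sub unfolding diagram_def by auto
  qed simp
  then have "{i. 1 \<le> i \<and> w < beta_seq t (part A) i} \<subseteq> {1..beads_above (beta_seq t (part B)) w}"
    unfolding beads_above_set[OF strict_antimono_beta_seq[OF partition_fun_part[OF B]], symmetric]
    by (force simp: beta_seq_def)
  then show ?thesis unfolding beads_above_def by (metis card_atLeastAtMost card_mono diff_Suc_1 finite_atLeastAtMost)
qed

lemma beads_above_exchange:
  assumes f: "strict_antimono_on {1..} f" and g: "strict_antimono_on {1..} g"
    and A: "finite A" and B: "finite B"
    and eq: "f ` {1..} \<union> A = g ` {1..} \<union> B" and dA: "f ` {1..} \<inter> A = {}" and dB: "g ` {1..} \<inter> B = {}"
  shows "beads_above f w + card {a \<in> A. w < a} = beads_above g w + card {a \<in> B. w < a}"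
proof -
  have split: "card {y \<in> h ` {1..} \<union> C. w < y} = beads_above h w + card {a \<in> C. w < a}"
    if h: "strict_antimono_on {1..} h" and C: "finite C" "h ` {1..} \<inter> C = {}" for h C
  proof -
    have "card {y \<in> h ` {1..} \<union> C. w < y} = card ({y \<in> h ` {1..}. w < y} \<union> {a \<in> C. w < a})"
      by (rule arg_cong[where f = card]) auto
    also have "\<dots> = beads_above h w + card {a \<in> C. w < a}"
      using finite_beads_above[OF h] C by (subst card_Un_disjoint) (auto simp: beads_above_image[OF h])
    finally show ?thesis .
  qed
  show ?thesis using split[OF f A dA] split[OF g B dB] eq by metis
qed

text \<open>Far below all the finitely many exchanged beads both sides are full, so they balance.\<close>

lemma card_exchange_eq:
  assumes P: "partition_fun P" and Q: "partition_fun Q" and A: "finite A" and B: "finite B"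
    and eq: "beta_seq t P ` {1..} \<union> A = beta_seq t Q ` {1..} \<union> B"
    and dA: "beta_seq t P ` {1..} \<inter> A = {}" and dB: "beta_seq t Q ` {1..} \<inter> B = {}"
  shows "card A = card B"
proof -
  obtain N1 N2 where N: "\<forall>i>N1. P i = 0" "\<forall>i>N2. Q i = 0" using P Q unfolding partition_fun_def by blast
  define w where "w = min (t - int (max N1 N2)) (Min (insert 0 (A \<union> B)) - 1)"
  have "w < e" if "e \<in> A \<union> B" for e
  proof -
    have "Min (insert 0 (A \<union> B)) \<le> e" using A B that by simp
    then show ?thesis unfolding w_def by simp
  qed
  then have "{a \<in> A. w < a} = A" "{a \<in> B. w < a} = B" by auto
  moreover have "beads_above (beta_seq t P) w = nat (t - w)" "beads_above (beta_seq t Q) w = nat (t - w)"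
    using beads_above_beta_seq_low[of N1 P w t] beads_above_beta_seq_low[of N2 Q w t] N
    by (simp_all add: w_def)
  ultimately show ?thesis
    using beads_above_exchange[OF strict_antimono_beta_seq[OF P] strict_antimono_beta_seq[OF Q] A B eq dA dB, of w]
    by simp
qed

lemma strict_antimono_image_eq:
  fixes f g :: "nat \<Rightarrow> int"
  assumes f: "strict_antimono_on {1..} f" and g: "strict_antimono_on {1..} g"
    and eq: "f ` {1..} = g ` {1..}" and i: "1 \<le> i"
  shows "f i = g i"
proof -
  have "f i \<in> g ` {1..}" using eq i by blast
  then obtain j where j: "1 \<le> j" "f i = g j" by auto
  have "beads_above f w = beads_above g w" for w
    using beads_above_image[OF f, of w] beads_above_image[OF g, of w] eq by simp
  then have "i = j" using beads_above_at(1)[OF f i] beads_above_at(1)[OF g j(1)] j i by simp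
  then show ?thesis using j by simp
qed

lemma card_above_doubleton:
  assumes "p \<noteq> q"
  shows "card {z \<in> {p, q}. (w::int) < z} = (if w < p then 1 else 0) + (if w < q then 1 else 0)"
proof -
  have "{z \<in> {p, q}. w < z} = (if w < p then {p} else {}) \<union> (if w < q then {q} else {})" by auto
  then show ?thesis using assms by (auto simp: card_insert_if)
qed

text \<open>The abaci agree above the row \<open>k\<close> of the top bead \<open>q1\<close> of \<open>la\<close>, and in row \<open>k\<close> the bead of
  \<open>la\<close> lies higher; so the first \<open>k\<close> parts of \<open>la\<close> outweigh those of \<open>mu\<close>.\<close>

lemma top_bead_gained_not_dom_le:
  assumes la: "is_partition la" and mu: "is_partition mu"
    and rel: "\<And>w. beads_above (beta_seq t (part la)) w + (if w < u then 1 else 0) + (if w < v then 1 else 0)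
                 = beads_above (beta_seq t (part mu)) w + (if w < q1 then 1 else 0) + (if w < q2 then 1 else 0)"
    and top: "u < q1" "v < q1" "q2 < q1"
  shows "\<not> dom_le la mu"
proof
  assume dom: "dom_le la mu"
  let ?F = "beta_seq t (part la)" and ?G = "beta_seq t (part mu)"
  have sF: "strict_antimono_on {1..} ?F" by (rule strict_antimono_beta_seq[OF partition_fun_part[OF la]])
  have sG: "strict_antimono_on {1..} ?G" by (rule strict_antimono_beta_seq[OF partition_fun_part[OF mu]])
  note iffF = beads_above_iff[OF sF] and iffG = beads_above_iff[OF sG]
  have hi: "beads_above ?F w = beads_above ?G w" if "q1 \<le> w" for w using rel[of w] that top by simp
  define k where "k = beads_above ?F q1 + 1"
  have k1: "1 \<le> k" unfolding k_def by simp
  have eq: "?F i = ?G i" if i: "1 \<le> i" "i < k" for i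
  proof (rule int_eq_by_thresholds[of q1 _ _ "max (?F i) (?G i)"])
    fix w assume "q1 \<le> w" "w < max (?F i) (?G i)"
    then show "w < ?F i \<longleftrightarrow> w < ?G i" using hi[of w] iffF[OF i(1), of w] iffG[OF i(1), of w] by simp
  qed (use iffF[OF i(1), of q1] iffG[OF i(1), of q1] i k_def hi[of q1] in auto)
  have "beads_above ?F (q1 - 1) = beads_above ?G (q1 - 1) + 1" using rel[of "q1 - 1"] top by simp
  moreover have "beads_above ?F (q1 - 1) \<le> beads_above ?F q1 + 1" by (rule beads_above_pred_le[OF sF])
  moreover have "beads_above ?G q1 \<le> beads_above ?G (q1 - 1)" by (rule beads_above_antimono[OF sG]) simp
  ultimately have "beads_above ?F (q1 - 1) = k" "beads_above ?G (q1 - 1) = k - 1"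
    using hi[of q1] k_def by auto
  then have Fk: "q1 - 1 < ?F k" and Gk: "\<not> q1 - 1 < ?G k"
    using iffF[OF k1, of "q1 - 1"] iffG[OF k1, of "q1 - 1"] k1 by simp_all
  have "(\<Sum>i=1..k. ?F i - ?G i) = (\<Sum>i=1..k - 1. ?F i - ?G i) + (?F k - ?G k)"
    using k1 by (cases k) (simp_all add: sum.cl_ivl_Suc)
  also have "(\<Sum>i=1..k - 1. ?F i - ?G i) = 0" by (rule sum.neutral) (use eq in auto)
  finally have "0 < (\<Sum>i=1..k. ?F i - ?G i)" using Fk Gk by simp
  then have "(\<Sum>i=1..k. int (part mu i)) < (\<Sum>i=1..k. int (part la i))"
    by (simp add: beta_seq_def sum_subtractf)
  moreover have "(\<Sum>i=1..k. part la i) \<le> (\<Sum>i=1..k. part mu i)" using dom unfolding dom_le_def by blast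
  then have "(\<Sum>i=1..k. int (part la i)) \<le> (\<Sum>i=1..k. int (part mu i))" by (metis of_nat_le_iff of_nat_sum)
  ultimately show False by simp
qed

section \<open>Runners\<close>

lemma c_d_m_decomposition:
  assumes n: "1 \<le> n" and l: "1 \<le> l"
  shows "k = c_of n l k + int n * (int (d_of n l k) - 1) + int n * int l * m_of n l k"
    "1 \<le> c_of n l k" "c_of n l k \<le> int n" "1 \<le> d_of n l k" "d_of n l k \<le> l"
proof -
  define M where "M = int n * int l"
  have M: "0 < M" using n l by (simp add: M_def)
  define R where "R = (k - 1) mod M"
  have R: "0 \<le> R" "R < M" using M by (simp_all add: R_def)
  have k1: "k - 1 = M * m_of n l k + R" unfolding R_def m_of_def M_def by simp
  have "0 \<le> R div int n" using R n by (simp add: pos_imp_zdiv_nonneg_iff)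
  then have dq: "int (d_of n l k) - 1 = R div int n" unfolding d_of_def R_def M_def by simp
  have cq: "c_of n l k = R mod int n + 1" unfolding c_of_def R_def M_def by simp
  show "k = c_of n l k + int n * (int (d_of n l k) - 1) + int n * int l * m_of n l k"
    using k1 dq cq div_mult_mod_eq[of R "int n"] unfolding M_def by (simp add: algebra_simps)
  have "R mod int n < int n" "0 \<le> R mod int n" using n by simp_all
  then show "1 \<le> c_of n l k" "c_of n l k \<le> int n" using cq by simp_all
  show "1 \<le> d_of n l k" unfolding d_of_def by simp
  have "R div int n * int n < int l * int n"
  proof -
    have "R div int n * int n + R mod int n = R" by (rule div_mult_mod_eq)
    moreover have "R < int l * int n" using R unfolding M_def by (simp add: mult.commute)
    ultimately show ?thesis using \<open>0 \<le> R mod int n\<close> by linarith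
  qed
  then have "R div int n < int l" by (rule mult_right_less_imp_less) simp
  then show "d_of n l k \<le> l" using dq by linarith
qed

text \<open>On a fixed runner both \<open>k\<close> and \<open>phi n l k\<close> are ordered lexicographically by
  \<open>(m_of n l k, c_of n l k)\<close>.\<close>

lemma phi_strict_mono_on_runner:
  assumes n: "1 \<le> n" and l: "1 \<le> l" and d: "d_of n l k1 = d_of n l k2" and lt: "k1 < k2"
  shows "phi n l k1 < phi n l k2"
proof -
  note A = c_d_m_decomposition[OF n l, of k1] and B = c_d_m_decomposition[OF n l, of k2]
  define c1 c2 m1 m2 where "c1 = c_of n l k1" "c2 = c_of n l k2" "m1 = m_of n l k1" "m2 = m_of n l k2"
  define N where "N = int n * (int (d_of n l k1) - 1)"
  have e1: "k1 = c1 + N + int n * int l * m1" using A(1) unfolding c1_c2_m1_m2_def N_def by simp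
  have e2: "k2 = c2 + N + int n * int l * m2" using B(1) d unfolding c1_c2_m1_m2_def N_def by simp
  have cb: "1 \<le> c1" "c1 \<le> int n" "1 \<le> c2" "c2 \<le> int n" using A B unfolding c1_c2_m1_m2_def by auto
  consider "m1 = m2" | "m1 < m2" | "m2 < m1" by linarith
  then show ?thesis
  proof cases
    case 1 then show ?thesis using e1 e2 lt unfolding phi_def c1_c2_m1_m2_def[symmetric] by simp
  next
    case 2
    then have "int n * (m1 + 1) \<le> int n * m2" using n by (simp add: mult_left_mono)
    then show ?thesis using cb unfolding phi_def c1_c2_m1_m2_def[symmetric] by (simp add: algebra_simps)
  next
    case 3
    then have "int n * int l * (m2 + 1) \<le> int n * int l * m1" using n l by (simp add: mult_left_mono)
    then have "int n * int l * m2 + int n * int l \<le> int n * int l * m1" by (simp add: algebra_simps)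
    moreover have "int n \<le> int n * int l" using n l by simp
    ultimately have False using e1 e2 lt cb by linarith
    then show ?thesis ..
  qed
qed

lemma phi_less_iff_on_runner:
  assumes "1 \<le> n" "1 \<le> l" "d_of n l k1 = d_of n l k2"
  shows "phi n l k1 < phi n l k2 \<longleftrightarrow> k1 < k2"
  using phi_strict_mono_on_runner[OF assms] phi_strict_mono_on_runner[OF assms(1,2) assms(3)[symmetric]]
  by (metis less_asym linorder_neqE)

lemma inj_on_phi_runner: "1 \<le> n \<Longrightarrow> 1 \<le> l \<Longrightarrow> inj_on (phi n l) {k. d_of n l k = b}"
  unfolding inj_on_def by (metis mem_Collect_eq linorder_neqE less_irrefl phi_strict_mono_on_runner)

lemma corr_runner:
  assumes c: "corr n l sl La la" and b: "1 \<le> b" "b \<le> l"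
  shows "beta_seq (sl b) (part (La b)) ` {1..}
       = phi n l ` (beta_seq (total_charge l sl) (part la) ` {1..} \<inter> {k. d_of n l k = b})"
proof (rule set_eqI)
  fix w
  have "w \<in> beta_seq (sl b) (part (La b)) ` {1..} \<longleftrightarrow>
      (w, b) \<in> {(int (part (La b) i) + sl b + 1 - int i, b) | b i. 1 \<le> b \<and> b \<le> l \<and> 1 \<le> i}"
    using b by (auto simp: beta_seq_def image_def)
  also have "\<dots> \<longleftrightarrow> (w, b) \<in> {(phi n l k, d_of n l k) | k.
        k \<in> {int (part la i) + total_charge l sl + 1 - int i | i. 1 \<le> i}}"
    using c unfolding corr_def by simp
  also have "\<dots> \<longleftrightarrow> w \<in> phi n l ` (beta_seq (total_charge l sl) (part la) ` {1..} \<inter> {k. d_of n l k = b})"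
    by (auto simp: beta_seq_def image_def)
  finally show "w \<in> beta_seq (sl b) (part (La b)) ` {1..} \<longleftrightarrow>
      w \<in> phi n l ` (beta_seq (total_charge l sl) (part la) ` {1..} \<inter> {k. d_of n l k = b})" .
qed

lemma runner_beads_exchange:
  fixes n l b :: nat and sl :: "nat \<Rightarrow> int" and La Mu :: "nat \<Rightarrow> nat list" and la mu :: "nat list"
    and A B :: "int set"
  defines "F \<equiv> beta_seq (total_charge l sl) (part la)" and "G \<equiv> beta_seq (total_charge l sl) (part mu)"
    and "R \<equiv> {k. d_of n l k = b}"
  assumes n: "1 \<le> n" and l: "1 \<le> l" and b: "1 \<le> b" "b \<le> l"
    and cL: "corr n l sl La la" and cM: "corr n l sl Mu mu"
    and pL: "is_partition (La b)" and pM: "is_partition (Mu b)"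
    and eq: "F ` {1..} \<union> A = G ` {1..} \<union> B" and dA: "F ` {1..} \<inter> A = {}" and dB: "G ` {1..} \<inter> B = {}"
    and A: "finite A" and B: "finite B"
  shows "beads_above (beta_seq (sl b) (part (La b))) w + card {a \<in> phi n l ` (A \<inter> R). w < a}
       = beads_above (beta_seq (sl b) (part (Mu b))) w + card {a \<in> phi n l ` (B \<inter> R). w < a}"
    "card (A \<inter> R) = card (B \<inter> R)"
proof -
  let ?fL = "beta_seq (sl b) (part (La b))" and ?fM = "beta_seq (sl b) (part (Mu b))"
  have inj: "inj_on (phi n l) R" unfolding R_def by (rule inj_on_phi_runner[OF n l])
  have L: "?fL ` {1..} = phi n l ` (F ` {1..} \<inter> R)" and M: "?fM ` {1..} = phi n l ` (G ` {1..} \<inter> R)"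
    unfolding F_def G_def R_def by (rule corr_runner[OF cL b], rule corr_runner[OF cM b])
  have "(F ` {1..} \<inter> R) \<union> (A \<inter> R) = (G ` {1..} \<inter> R) \<union> (B \<inter> R)"
    using eq by blast
  then have eq': "?fL ` {1..} \<union> phi n l ` (A \<inter> R) = ?fM ` {1..} \<union> phi n l ` (B \<inter> R)"
    unfolding L M by (metis image_Un)
  have dA': "?fL ` {1..} \<inter> phi n l ` (A \<inter> R) = {}"
    unfolding L using inj_on_image_Int[OF inj, of "F ` {1..} \<inter> R" "A \<inter> R"] dA by auto
  have dB': "?fM ` {1..} \<inter> phi n l ` (B \<inter> R) = {}"
    unfolding M using inj_on_image_Int[OF inj, of "G ` {1..} \<inter> R" "B \<inter> R"] dB by auto
  note pfL = partition_fun_part[OF pL] and pfM = partition_fun_part[OF pM]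
  show "beads_above ?fL w + card {a \<in> phi n l ` (A \<inter> R). w < a}
      = beads_above ?fM w + card {a \<in> phi n l ` (B \<inter> R). w < a}"
    by (rule beads_above_exchange[OF strict_antimono_beta_seq[OF pfL] strict_antimono_beta_seq[OF pfM]
          _ _ eq' dA' dB']) (use A B in auto)
  have "card (phi n l ` (A \<inter> R)) = card (phi n l ` (B \<inter> R))"
    by (rule card_exchange_eq[OF pfL pfM _ _ eq' dA' dB']) (use A B in auto)
  moreover have "inj_on (phi n l) (A \<inter> R)" "inj_on (phi n l) (B \<inter> R)"
    using inj by (auto intro: inj_on_subset)
  ultimately show "card (A \<inter> R) = card (B \<inter> R)" by (simp add: card_image)
qed

lemma runner_row_bound:
  fixes n l b r j :: nat and sl :: "nat \<Rightarrow> int" and La :: "nat \<Rightarrow> nat list" and la :: "nat list"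
  defines "F \<equiv> beta_seq (total_charge l sl) (part la)"
  assumes n: "1 \<le> n" and l: "1 \<le> l" and b: "1 \<le> b" "b \<le> l"
    and cL: "corr n l sl La la" and pla: "is_partition la" and pLb: "is_partition (La b)"
    and j: "1 \<le> j" "j \<le> r" "d_of n l (F j) = b"
  shows "beads_above (beta_seq (sl b) (part (La b))) (phi n l (F j)) < card {i \<in> {1..r}. d_of n l (F i) = b}"
proof -
  let ?fb = "beta_seq (sl b) (part (La b))" and ?R = "{k. d_of n l k = b}"
  have sF: "strict_antimono_on {1..} F"
    unfolding F_def by (rule strict_antimono_beta_seq[OF partition_fun_part[OF pla]])
  have sb: "strict_antimono_on {1..} ?fb" by (rule strict_antimono_beta_seq[OF partition_fun_part[OF pLb]])
  have img: "?fb ` {1..} = phi n l ` (F ` {1..} \<inter> ?R)" unfolding F_def by (rule corr_runner[OF cL b])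
  then obtain i0 where i0: "1 \<le> i0" "phi n l (F j) = ?fb i0" using j by blast
  have "beads_above ?fb (phi n l (F j)) < beads_above ?fb (phi n l (F j) - 1)"
    using beads_above_at[OF sb i0(1)] i0 by simp
  also have "\<dots> = card {y \<in> ?fb ` {1..}. phi n l (F j) - 1 < y}" by (rule beads_above_image[OF sb])
  also have "{y \<in> ?fb ` {1..}. phi n l (F j) - 1 < y} = phi n l ` {k \<in> F ` {1..} \<inter> ?R. F j \<le> k}"
  proof -
    have "phi n l (F j) - 1 < phi n l k \<longleftrightarrow> F j \<le> k" if "d_of n l k = b" for k
      using phi_less_iff_on_runner[OF n l, of k "F j"] j(3) that by auto
    then show ?thesis unfolding img by auto
  qed
  also have "card \<dots> = card {k \<in> F ` {1..} \<inter> ?R. F j \<le> k}"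
    by (rule card_image) (rule inj_on_subset[OF inj_on_phi_runner[OF n l, of b]], auto)
  also have "\<dots> \<le> card (F ` {i \<in> {1..r}. d_of n l (F i) = b})"
  proof (rule card_mono)
    show "{k \<in> F ` {1..} \<inter> ?R. F j \<le> k} \<subseteq> F ` {i \<in> {1..r}. d_of n l (F i) = b}"
      using strict_antimono_from1_le_iff[OF sF j(1)] j by fastforce
  qed simp
  also have "\<dots> \<le> card {i \<in> {1..r}. d_of n l (F i) = b}" by (rule card_image_le) simp
  finally show ?thesis .
qed

lemma beads_above_min_split:
  fixes cP cQ cN :: "int \<Rightarrow> nat" and a a' b b' w :: int
  assumes rel: "cP w + (if w < a then 1 else 0) + (if w < b then 1 else 0)
              = cQ w + (if w < a' then 1 else 0) + (if w < b' then 1 else 0)"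
    and cN: "cN w = min (cP w) (cQ w)"
    and order: "a < a'" "a' < b" "a < b'" "b' < b"
  shows "cP w = cN w + (if a \<le> w \<and> w < min a' b' then 1 else 0)"
    "cQ w = cN w + (if max a' b' \<le> w \<and> w < b then 1 else 0)"
  using assms by (auto simp: min_def max_def split: if_splits)

lemma bead_move_of_containment:
  fixes A B :: "nat list" and t p q :: int
  defines "fA \<equiv> beta_seq t (part A)" and "fB \<equiv> beta_seq t (part B)"
  assumes A: "is_partition A" and sub: "diagram B \<subseteq> diagram A"
    and move: "\<And>w. beads_above fA w + (if w < p then 1 else 0) = beads_above fB w + (if w < q then 1 else 0)"
    and "p \<noteq> q"
  shows "p < q" "\<And>w. beads_above fA w = beads_above fB w + (if p \<le> w \<and> w < q then 1 else 0)"
proof -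
  have "beads_above fB q \<le> beads_above fA q"
    unfolding fA_def fB_def by (rule beads_above_mono_diagram[OF sub A])
  then show pq: "p < q" using move[of q] \<open>p \<noteq> q\<close> by (auto split: if_splits)
  show "beads_above fA w = beads_above fB w + (if p \<le> w \<and> w < q then 1 else 0)" for w
    using move[of w] pq by (auto split: if_splits)
qed

text \<open>\<open>R\<close> must be large enough for the beta vectors to reach the tail and head rows.\<close>

lemma single_bead_move_hook:
  fixes A B :: "nat list" and t p q :: int
  defines "fA \<equiv> beta_seq t (part A)" and "fB \<equiv> beta_seq t (part B)"
  assumes A: "is_partition A" and B: "is_partition B" and sub: "diagram B \<subseteq> diagram A"
    and move: "\<And>w. beads_above fA w + (if w < p then 1 else 0) = beads_above fB w + (if w < q then 1 else 0)"
    and "p \<noteq> q" and bounds: "beads_above fA q < R" "beads_above fB p < R"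
  shows "beta_vec R t A (tail_row (diagram A - diagram B)) = q"
    "beta_vec R t B (head_row (diagram A - diagram B)) = p"
    "int (card (diagram A - diagram B)) = q - p"
proof -
  note move' = bead_move_of_containment[OF A sub move[unfolded fA_def fB_def] \<open>p \<noteq> q\<close>]
  have S: "diagram A - diagram B = diagram_fun (part A) - diagram_fun (part B)"
    by (simp add: diagram_eq_diagram_fun)
  note hook = bead_move_skew_diagram[OF partition_fun_part[OF A] partition_fun_part[OF B] move'(2) move'(1)]
  note pos = bead_move_positions[OF strict_antimono_beta_seq[OF partition_fun_part[OF A]]
      strict_antimono_beta_seq[OF partition_fun_part[OF B]] move'(2) move'(1)]
  show "beta_vec R t A (tail_row (diagram A - diagram B)) = q"
    unfolding S hook(1) using pos(1) bounds(1) by (simp add: beta_vec_eq_beta_seq fA_def)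
  show "beta_vec R t B (head_row (diagram A - diagram B)) = p"
    unfolding S hook(2) using pos(2) bounds(2) by (simp add: beta_vec_eq_beta_seq fB_def)
  show "int (card (diagram A - diagram B)) = q - p"
    unfolding S by (rule hook(3))
qed

lemma exchange_of_card_Int:
  assumes fin: "finite A" and card: "card A = r" "card (A \<inter> B) = r - 2"
    and mem: "a1 \<in> A" "a2 \<in> A" "b1 \<in> B" "b2 \<in> B"
    and common: "A - {a1, a2} = B - {b1, b2}"
  shows "A \<inter> {b1, b2} = {}" "B \<inter> {a1, a2} = {}" "A \<union> {b1, b2} = B \<union> {a1, a2}"
proof -
  have "card {a1, a2} \<le> 2" by (simp add: card_insert_if)
  moreover have "card A - card {a1, a2} \<le> card (A - {a1, a2})" by (rule diff_card_le_card_Diff) simp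
  ultimately have "r - 2 \<le> card (A - {a1, a2})" using card(1) by linarith
  moreover have "A - {a1, a2} \<subseteq> A \<inter> B" using common by blast
  ultimately have "A - {a1, a2} = A \<inter> B"
    using card(2) fin by (intro card_seteq) auto
  then show "A \<inter> {b1, b2} = {}" "B \<inter> {a1, a2} = {}" "A \<union> {b1, b2} = B \<union> {a1, a2}"
    using common mem by blast+
qed

locale two_bead_exchange =
  fixes t :: int and r :: nat and la mu :: "nat list" and u v u' v' :: int
  assumes partitions: "is_partition la" "is_partition mu"
    and lengths: "length la \<le> r" "length mu \<le> r"
    and rows_exchange: "beta_seq t (part la) ` {1..r} \<union> {u, v} = beta_seq t (part mu) ` {1..r} \<union> {u', v'}"
    and rows_disjoint: "beta_seq t (part la) ` {1..r} \<inter> {u, v} = {}"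
      "beta_seq t (part mu) ` {1..r} \<inter> {u', v'} = {}"
    and moved: "{u, v} \<subseteq> beta_seq t (part mu) ` {1..r}" "{u', v'} \<subseteq> beta_seq t (part la) ` {1..r}"
begin

abbreviation "F \<equiv> beta_seq t (part la)"
abbreviation "G \<equiv> beta_seq t (part mu)"

lemma strict_antimono_F: "strict_antimono_on {1..} F"
  by (rule strict_antimono_beta_seq[OF partition_fun_part[OF partitions(1)]])

lemma strict_antimono_G: "strict_antimono_on {1..} G"
  by (rule strict_antimono_beta_seq[OF partition_fun_part[OF partitions(2)]])

lemma F_eq_G_beyond: "r < i \<Longrightarrow> F i = G i"
  using lengths part_eq_0[of la i] part_eq_0[of mu i] by (simp add: beta_seq_def)

lemma exchange: "F ` {1..} \<union> {u, v} = G ` {1..} \<union> {u', v'}"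
  and disjoint: "F ` {1..} \<inter> {u, v} = {}" "G ` {1..} \<inter> {u', v'} = {}"
proof -
  have U: "{1..} = {1..r} \<union> {r<..}" by auto
  have T: "F ` {r<..} = G ` {r<..}" by (rule image_cong) (simp_all add: F_eq_G_beyond)
  have tail_disj: "A ` {r<..} \<inter> A ` {1..r} = {}" if "inj_on A {1..}" for A :: "nat \<Rightarrow> int"
  proof -
    have "A ` ({r<..} \<inter> {1..r}) = A ` {r<..} \<inter> A ` {1..r}" by (rule inj_on_image_Int[OF that]) auto
    moreover have "{r<..} \<inter> {1..r} = {}" by auto
    ultimately show ?thesis by simp
  qed
  have F: "F ` {1..} = F ` {1..r} \<union> G ` {r<..}" unfolding U image_Un T ..
  have G: "G ` {1..} = G ` {1..r} \<union> G ` {r<..}" unfolding U image_Un ..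
  have TF: "G ` {r<..} \<inter> F ` {1..r} = {}"
    using tail_disj[OF strict_antimono_from1_inj[OF strict_antimono_F]] unfolding T .
  have TG: "G ` {r<..} \<inter> G ` {1..r} = {}"
    by (rule tail_disj[OF strict_antimono_from1_inj[OF strict_antimono_G]])
  have "F ` {1..} \<union> {u, v} = (F ` {1..r} \<union> {u, v}) \<union> G ` {r<..}" unfolding F by blast
  also have "\<dots> = (G ` {1..r} \<union> {u', v'}) \<union> G ` {r<..}" by (simp only: rows_exchange)
  also have "\<dots> = G ` {1..} \<union> {u', v'}" unfolding G by blast
  finally show "F ` {1..} \<union> {u, v} = G ` {1..} \<union> {u', v'}" .
  show "F ` {1..} \<inter> {u, v} = {}"
    unfolding F using rows_disjoint(1) moved(1) TG by blast
  show "G ` {1..} \<inter> {u', v'} = {}"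
    unfolding G using rows_disjoint(2) moved(2) TF by blast
qed

lemma beads_above_two_exchange:
  "beads_above F w + card {z \<in> {u, v}. w < z} = beads_above G w + card {z \<in> {u', v'}. w < z}"
  by (rule beads_above_exchange[OF strict_antimono_F strict_antimono_G _ _ exchange disjoint]) simp_all

lemma card_moved: "card {u, v} = card {u', v'}"
  by (rule card_exchange_eq[OF partition_fun_part[OF partitions(1)] partition_fun_part[OF partitions(2)]
        _ _ exchange disjoint]) simp_all

text \<open>Dominance forces \<open>u' < v\<close>: otherwise \<open>u'\<close> is the top bead and \<open>la\<close> gains it. Then \<open>la\<close> is the
  meet of \<open>la\<close> and \<open>mu\<close> plus one rim hook whose tail bead sits at \<open>min u' v'\<close>.\<close>

lemma shifted_exchange_order:
  fixes h :: int
  assumes dom: "dom_le la mu" and h: "0 < h" and u': "u' = u + h" and v': "v' = v - h"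
    and tail: "F (tail_row (diagram la - diagram mu)) = u'"
  shows "u < u'" "u' < v'" "v' < v"
proof -
  have uv: "u \<noteq> v"
  proof
    assume "u = v"
    then have "u' \<noteq> v'" using u' v' h by simp
    then show False using card_moved \<open>u = v\<close> by simp
  qed
  have uv': "u' \<noteq> v'"
  proof
    assume "u' = v'"
    then show False using card_moved uv by simp
  qed
  have rel: "beads_above F w + (if w < u then 1 else 0) + (if w < v then 1 else 0)
      = beads_above G w + (if w < u' then 1 else 0) + (if w < v' then 1 else 0)" for w
    using beads_above_two_exchange[of w] card_above_doubleton[OF uv, of w] card_above_doubleton[OF uv', of w]
    by simp
  show "u < u'" using u' h by simp
  have "v \<in> G ` {1..}" using moved(1) by auto
  moreover have "u' \<notin> G ` {1..}" using disjoint(2) by auto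
  ultimately have "u' \<noteq> v" by auto
  moreover have "\<not> v < u'"
  proof
    assume "v < u'"
    moreover have "u < u'" "v' < u'" using \<open>v < u'\<close> u' v' h by simp_all
    ultimately show False using top_bead_gained_not_dom_le[OF partitions rel] dom by blast
  qed
  ultimately have "u' < v" by simp
  have order: "u < u'" "u' < v" "u < v'" "v' < v" using \<open>u' < v\<close> u' v' h by simp_all
  define N where "N = (\<lambda>i. min (part la i) (part mu i))"
  have pN: "partition_fun N"
    unfolding N_def by (rule partition_fun_min[OF partition_fun_part partition_fun_part]) (use partitions in simp_all)
  have cN: "beads_above (beta_seq t N) w = min (beads_above F w) (beads_above G w)" for w
    unfolding N_def beta_seq_min by (rule beads_above_min[OF strict_antimono_F strict_antimono_G])
  define M where "M = min u' v'"
  have move: "beads_above F w = beads_above (beta_seq t N) w + (if u \<le> w \<and> w < M then 1 else 0)" for w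
    using beads_above_min_split(1)[where cP = "beads_above F" and cQ = "beads_above G"
        and cN = "beads_above (beta_seq t N)", OF rel cN order] unfolding M_def .
  have "u < M" using order unfolding M_def by simp
  have "diagram la - diagram mu = diagram_fun (part la) - diagram_fun N"
    unfolding N_def diagram_eq_diagram_fun diagram_fun_Int[symmetric] by blast
  then have "F (tail_row (diagram la - diagram mu)) = M"
    using bead_move_skew_diagram(1)[OF partition_fun_part[OF partitions(1)] pN move \<open>u < M\<close>]
      bead_move_positions(1)[OF strict_antimono_F strict_antimono_beta_seq[OF pN] move \<open>u < M\<close>]
    by simp
  then show "u' < v'" using tail uv' unfolding M_def by simp
  show "v' < v" using v' h by simp
qed

end

lemma Bset_eq_image: "Bset t la = beta_seq t (part la) ` {1..psize la}"
proof -
  have "Bset t la = beta_vec (psize la) t la ` {1..psize la}" unfolding Bset_def by auto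
  also have "\<dots> = beta_seq t (part la) ` {1..psize la}"
    by (rule image_cong) (simp_all add: beta_vec_eq_beta_seq)
  finally show ?thesis .
qed

lemma two_bead_exchange_of_common_rows:
  fixes la mu :: "nat list" and t :: int and r :: nat and x x' y y' :: nat and u v u' v' :: int
  defines "F \<equiv> beta_seq t (part la)" and "G \<equiv> beta_seq t (part mu)"
  assumes la: "is_partition la" "psize la = r" and mu: "is_partition mu" "psize mu = r"
    and common: "card (Bset t la \<inter> Bset t mu) = r - 2"
    and rows: "x \<in> {1..r}" "y \<in> {1..r}" "x' \<in> {1..r}" "y' \<in> {1..r}"
    and same: "F ` ({1..r} - {x', y'}) = G ` ({1..r} - {x, y})"
  shows "two_bead_exchange t r la mu (G x) (G y) (F x') (F y')"
proof -
  have injF: "inj_on F {1..r}" unfolding F_def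
    by (rule inj_on_subset[OF strict_antimono_from1_inj[OF strict_antimono_beta_seq[OF partition_fun_part[OF la(1)]]]]) auto
  have injG: "inj_on G {1..r}" unfolding G_def
    by (rule inj_on_subset[OF strict_antimono_from1_inj[OF strict_antimono_beta_seq[OF partition_fun_part[OF mu(1)]]]]) auto
  have B: "Bset t la = F ` {1..r}" "Bset t mu = G ` {1..r}"
    unfolding F_def G_def Bset_eq_image la(2) mu(2) by simp_all
  have "F ` {1..r} - {F x', F y'} = G ` {1..r} - {G x, G y}"
    using same rows inj_on_image_set_diff[OF injF, of "{1..r}" "{x', y'}"]
      inj_on_image_set_diff[OF injG, of "{1..r}" "{x, y}"] by auto
  note diff = this
  have cardF: "card (F ` {1..r}) = r" using card_image[OF injF] by simp
  have mem: "F x' \<in> F ` {1..r}" "F y' \<in> F ` {1..r}" "G x \<in> G ` {1..r}" "G y \<in> G ` {1..r}"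
    using rows by simp_all
  note ex = exchange_of_card_Int[OF finite_imageI[OF finite_atLeastAtMost] cardF common[unfolded B] mem diff]
  show ?thesis
  proof (rule two_bead_exchange.intro)
    show "is_partition la" "is_partition mu" using la(1) mu(1) .
    show "length la \<le> r" "length mu \<le> r" using length_le_psize[OF la(1)] length_le_psize[OF mu(1)] la(2) mu(2) by simp_all
    show "beta_seq t (part la) ` {1..r} \<union> {G x, G y} = beta_seq t (part mu) ` {1..r} \<union> {F x', F y'}"
      "beta_seq t (part la) ` {1..r} \<inter> {G x, G y} = {}" "beta_seq t (part mu) ` {1..r} \<inter> {F x', F y'} = {}"
      using ex unfolding F_def G_def by simp_all
    show "{G x, G y} \<subseteq> beta_seq t (part mu) ` {1..r}" "{F x', F y'} \<subseteq> beta_seq t (part la) ` {1..r}"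
      using mem unfolding F_def G_def by simp_all
  qed
qed

section \<open>The exchange seen on the runners\<close>

locale runner_exchange = two_bead_exchange "total_charge l sl" r la mu u v u' v'
  for n l :: nat and sl :: "nat \<Rightarrow> int" and r :: nat and La Mu :: "nat \<Rightarrow> nat list"
    and la mu :: "nat list" and u v u' v' :: int +
  assumes n: "1 \<le> n" and l: "1 \<le> l"
    and component_partitions: "\<And>b. is_partition (La b)" "\<And>b. is_partition (Mu b)"
    and corr: "corr n l sl La la" "corr n l sl Mu mu"
    and order: "u < u'" "u' < v'" "v' < v"
begin

abbreviation "dd \<equiv> d_of n l"
abbreviation "ph \<equiv> phi n l"
abbreviation "runner b \<equiv> {k. d_of n l k = b}"
abbreviation "fLa b \<equiv> beta_seq (sl b) (part (La b))"
abbreviation "fMu b \<equiv> beta_seq (sl b) (part (Mu b))"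
abbreviation "rb b \<equiv> card {i \<in> {1..r}. d_of n l (beta_vec r (total_charge l sl) la i) = b}"

lemma rb_eq: "rb b = card {i \<in> {1..r}. dd (F i) = b}"
  by (rule arg_cong[where f = card]) (auto simp: beta_vec_eq_beta_seq)

lemma card_rows_mu_eq:
  "card {i \<in> {1..r}. dd (beta_vec r (total_charge l sl) mu i) = b} = card {i \<in> {1..r}. dd (G i) = b}"
  by (rule arg_cong[where f = card]) (auto simp: beta_vec_eq_beta_seq)

lemma d_of_range: "1 \<le> dd k" "dd k \<le> l"
  using c_d_m_decomposition[OF n l] by auto

lemma strict_antimono_fLa: "strict_antimono_on {1..} (fLa b)"
  by (rule strict_antimono_beta_seq[OF partition_fun_part[OF component_partitions(1)]])

lemma strict_antimono_fMu: "strict_antimono_on {1..} (fMu b)"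
  by (rule strict_antimono_beta_seq[OF partition_fun_part[OF component_partitions(2)]])

lemma runner_relation:
  assumes "1 \<le> b" "b \<le> l"
  shows "beads_above (fLa b) w + card {z \<in> ph ` ({u, v} \<inter> runner b). w < z}
       = beads_above (fMu b) w + card {z \<in> ph ` ({u', v'} \<inter> runner b). w < z}"
  by (rule runner_beads_exchange(1)[OF n l assms corr component_partitions exchange disjoint]) simp_all

lemma card_runner_moved: "card ({u, v} \<inter> runner b) = card ({u', v'} \<inter> runner b)"
proof (cases "1 \<le> b \<and> b \<le> l")
  case True
  then show ?thesis
    by (intro runner_beads_exchange(2)[OF n l _ _ corr component_partitions exchange disjoint]) simp_all
next
  case False
  then have "{u, v} \<inter> runner b = {}" "{u', v'} \<inter> runner b = {}" using d_of_range by fastforce+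
  then show ?thesis by simp
qed

lemma moved_runners: "{dd u, dd v} = {dd u', dd v'}"
proof (rule set_eqI)
  fix b
  have fin: "finite ({u, v} \<inter> runner b)" "finite ({u', v'} \<inter> runner b)" by simp_all
  have "{u, v} \<inter> runner b = {} \<longleftrightarrow> {u', v'} \<inter> runner b = {}"
    using card_0_eq[OF fin(1)] card_0_eq[OF fin(2)] card_runner_moved[of b] by simp
  moreover have "b \<in> {dd k, dd k'} \<longleftrightarrow> {k, k'} \<inter> runner b \<noteq> {}" for k k' by auto
  ultimately show "b \<in> {dd u, dd v} \<longleftrightarrow> b \<in> {dd u', dd v'}" by blast
qed

lemma count_rows_on_runner:
  assumes "inj_on H {1..r}"
  shows "card {i \<in> {1..r}. dd (H i) = b} = card (H ` {1..r} \<inter> runner b)"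
proof -
  have "H ` {i \<in> {1..r}. dd (H i) = b} = H ` {1..r} \<inter> runner b" by auto
  moreover have "inj_on H {i \<in> {1..r}. dd (H i) = b}" by (rule inj_on_subset[OF assms]) auto
  ultimately show ?thesis by (metis card_image)
qed

lemma runner_counts_eq: "rb b = card {i \<in> {1..r}. dd (beta_vec r (total_charge l sl) mu i) = b}"
proof -
  have injF: "inj_on F {1..r}" by (rule inj_on_subset[OF strict_antimono_from1_inj[OF strict_antimono_F]]) auto
  have injG: "inj_on G {1..r}" by (rule inj_on_subset[OF strict_antimono_from1_inj[OF strict_antimono_G]]) auto
  have split: "card ((A \<union> X) \<inter> runner b) = card (A \<inter> runner b) + card (X \<inter> runner b)"
    if "finite A" "finite X" "A \<inter> X = {}" for A X :: "int set"
  proof -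
    have "(A \<union> X) \<inter> runner b = (A \<inter> runner b) \<union> (X \<inter> runner b)" by blast
    moreover have "(A \<inter> runner b) \<inter> (X \<inter> runner b) = {}" using that(3) by blast
    ultimately show ?thesis using that(1,2) by (simp add: card_Un_disjoint)
  qed
  have fin: "finite (F ` {1..r})" "finite (G ` {1..r})" by simp_all
  have "card (F ` {1..r} \<inter> runner b) + card ({u, v} \<inter> runner b)
      = card ((F ` {1..r} \<union> {u, v}) \<inter> runner b)"
    by (rule split[OF fin(1) _ rows_disjoint(1), symmetric]) simp
  also have "\<dots> = card ((G ` {1..r} \<union> {u', v'}) \<inter> runner b)" by (simp only: rows_exchange)
  also have "\<dots> = card (G ` {1..r} \<inter> runner b) + card ({u', v'} \<inter> runner b)"
    by (rule split[OF fin(2) _ rows_disjoint(2)]) simp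
  finally show ?thesis
    using card_runner_moved[of b] count_rows_on_runner[OF injF, of b] count_rows_on_runner[OF injG, of b]
    unfolding rb_eq card_rows_mu_eq by linarith
qed

lemma row_bound_La:
  assumes "k \<in> F ` {1..r}" shows "beads_above (fLa (dd k)) (ph k) < rb (dd k)"
proof -
  obtain j where "j \<in> {1..r}" "k = F j" using assms by blast
  then show ?thesis
    using runner_row_bound[OF n l d_of_range corr(1) partitions(1) component_partitions(1), of j r]
    unfolding rb_eq by simp
qed

lemma row_bound_Mu:
  assumes "k \<in> G ` {1..r}" shows "beads_above (fMu (dd k)) (ph k) < rb (dd k)"
proof -
  obtain j where "j \<in> {1..r}" "k = G j" using assms by blast
  then show ?thesis
    using runner_row_bound[OF n l d_of_range corr(2) partitions(2) component_partitions(2), of j r]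
    unfolding runner_counts_eq card_rows_mu_eq by simp
qed

lemma runner_image_La: "fLa b ` {1..} = ph ` (F ` {1..} \<inter> runner b)" if "1 \<le> b" "b \<le> l"
  by (rule corr_runner[OF corr(1) that])

lemma runner_image_Mu: "fMu b ` {1..} = ph ` (G ` {1..} \<inter> runner b)" if "1 \<le> b" "b \<le> l"
  by (rule corr_runner[OF corr(2) that])

lemma unchanged_component_avoids:
  assumes b: "1 \<le> b" "b \<le> l" and eq: "La b = Mu b"
  shows "dd u \<noteq> b" "dd v \<noteq> b"
proof -
  have "ph ` (F ` {1..} \<inter> runner b) = ph ` (G ` {1..} \<inter> runner b)"
    using runner_image_La[OF b] runner_image_Mu[OF b] unfolding eq by (rule trans[OF sym])
  moreover have "F ` {1..} \<inter> runner b \<subseteq> runner b" "G ` {1..} \<inter> runner b \<subseteq> runner b" by blast+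
  ultimately have E: "F ` {1..} \<inter> runner b = G ` {1..} \<inter> runner b"
    by (simp add: inj_on_image_eq_iff[OF inj_on_phi_runner[OF n l, of b]])
  have "dd k \<noteq> b" if k: "k \<in> {u, v}" for k
  proof
    assume "dd k = b"
    moreover have "k \<in> G ` {1..}" using k moved(1) by auto
    ultimately have "k \<in> F ` {1..} \<inter> runner b" unfolding E by simp
    then show False using k disjoint(1) by blast
  qed
  then show "dd u \<noteq> b" "dd v \<noteq> b" by simp_all
qed

lemma untouched_runner:
  assumes b: "1 \<le> b" "b \<le> l" and nu: "dd u \<noteq> b" and nv: "dd v \<noteq> b"
  shows "diagram (La b) = diagram (Mu b)"
proof -
  have "dd u' \<noteq> b" "dd v' \<noteq> b" using moved_runners nu nv by (metis insert_iff empty_iff)+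
  then have "{u, v} \<inter> runner b = {}" "{u', v'} \<inter> runner b = {}" using nu nv by auto
  then have "F ` {1..} \<inter> runner b = (F ` {1..} \<union> {u, v}) \<inter> runner b"
    "G ` {1..} \<inter> runner b = (G ` {1..} \<union> {u', v'}) \<inter> runner b" by blast+
  then have "F ` {1..} \<inter> runner b = G ` {1..} \<inter> runner b" unfolding exchange by simp
  then have "fLa b ` {1..} = fMu b ` {1..}"
    using runner_image_La[OF b] runner_image_Mu[OF b] by simp
  then have "part (La b) i = part (Mu b) i" if "1 \<le> i" for i
    using strict_antimono_image_eq[OF strict_antimono_fLa[of b] strict_antimono_fMu[of b] _ that]
    by (simp add: beta_seq_def)
  then show ?thesis unfolding diagram_def by auto
qed

lemma single_runner_move:
  assumes b: "1 \<le> b" "b \<le> l" and p: "{u, v} \<inter> runner b = {p}" and q: "{u', v'} \<inter> runner b = {q}"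
  shows "beads_above (fLa b) w + (if w < ph p then 1 else 0) = beads_above (fMu b) w + (if w < ph q then 1 else 0)"
proof -
  have single: "card {z \<in> {c}. w < z} = (if w < c then 1 else 0)" for c :: int
  proof -
    have "{z \<in> {c}. w < z} = (if w < c then {c} else {})" by auto
    then show ?thesis by simp
  qed
  show ?thesis using runner_relation[OF b, of w] unfolding p q image_insert image_empty single .
qed

lemma phi_neq_on_runner: "dd a = dd c \<Longrightarrow> a \<noteq> c \<Longrightarrow> ph a \<noteq> ph c"
  using inj_on_phi_runner[OF n l, of "dd c"] by (auto dest: inj_onD)


lemma moved_bead_on_runner:
  assumes "{u, v} \<inter> runner b = {p}"
  obtains q where "{u', v'} \<inter> runner b = {q}"
  using card_runner_moved[of b] assms by (metis card_1_singleton_iff is_singletonI is_singleton_altdef)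

context
  fixes d d' :: nat
  assumes J1: "J1 l La Mu d d'"
begin

lemma J1_facts:
  "d \<noteq> d'" "1 \<le> d" "d \<le> l" "1 \<le> d'" "d' \<le> l"
  "diagram (Mu d) \<subseteq> diagram (La d)" "diagram (La d') \<subseteq> diagram (Mu d')"
  "card (diagram (La d) - diagram (Mu d)) = card (diagram (Mu d') - diagram (La d'))"
  using J1 unfolding J1_def by auto

lemma J1_runners: "{dd u, dd v} = {d, d'}"
proof -
  from J1 have others: "\<And>b. 1 \<le> b \<Longrightarrow> b \<le> l \<Longrightarrow> b \<noteq> d \<Longrightarrow> b \<noteq> d' \<Longrightarrow> La b = Mu b"
    and ne: "diagram (La d) - diagram (Mu d) \<noteq> {}" "diagram (Mu d') - diagram (La d') \<noteq> {}"
    unfolding J1_def ribbon_def by auto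
  have "dd k \<in> {d, d'}" if "k \<in> {u, v}" for k
    using others[OF d_of_range] unchanged_component_avoids[OF d_of_range] that by blast
  moreover have "b \<in> {dd u, dd v}" if "b \<in> {d, d'}" for b
    using untouched_runner[of b] that J1_facts(2-5) ne by auto
  ultimately show ?thesis by blast
qed

text \<open>On runner \<open>d\<close> the component grows, so its bead must move up; this rules out \<open>v\<close> on runner \<open>d\<close>.\<close>

lemma J1_moved_runners: "dd u = d" "dd v = d'"
proof -
  have "\<not> (dd u = d' \<and> dd v = d)"
  proof
    assume a: "dd u = d' \<and> dd v = d"
    then have "{u, v} \<inter> runner d = {v}" using J1_facts(1) by auto
    then obtain k where k: "{u', v'} \<inter> runner d = {k}" by (rule moved_bead_on_runner)
    then have "k \<in> {u', v'}" "dd k = d" by auto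
    then have "v \<noteq> k" using order by auto
    then have "ph v \<noteq> ph k" using phi_neq_on_runner a \<open>dd k = d\<close> by simp
    with bead_move_of_containment(1)[OF component_partitions(1) J1_facts(6)
        single_runner_move[OF J1_facts(2,3) \<open>{u, v} \<inter> runner d = {v}\<close> k]]
    have "ph v < ph k" by simp
    then have "v < k" using phi_less_iff_on_runner[OF n l, of v k] a \<open>dd k = d\<close> by simp
    then show False using \<open>k \<in> {u', v'}\<close> order by auto
  qed
  then show "dd u = d" "dd v = d'" using J1_runners J1_facts(1) by (auto simp: doubleton_eq_iff)
qed

lemma J1_hooks:
  assumes k: "{k, k'} = {u', v'}" "dd k = d" "dd k' = d'"
  shows "beta_vec (rb d) (sl d) (Mu d) (head_row (diagram (La d) - diagram (Mu d))) = ph u"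
    "beta_vec (rb d) (sl d) (La d) (tail_row (diagram (La d) - diagram (Mu d))) = ph k"
    "beta_vec (rb d') (sl d') (La d') (head_row (diagram (Mu d') - diagram (La d'))) = ph k'"
    "beta_vec (rb d') (sl d') (Mu d') (tail_row (diagram (Mu d') - diagram (La d'))) = ph v"
    "int (card (diagram (La d) - diagram (Mu d))) = ph k - ph u"
    "ph k - ph u = ph v - ph k'"
proof -
  note du = J1_moved_runners(1) and dv = J1_moved_runners(2)
  have kin: "k \<in> F ` {1..r}" "k' \<in> F ` {1..r}" using k(1) moved(2) by blast+
  have "u \<noteq> k" "v \<noteq> k'" using k(1) order by (auto simp: doubleton_eq_iff)
  then have ne: "ph u \<noteq> ph k" "ph k' \<noteq> ph v" using phi_neq_on_runner du dv k(2,3) by metis+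
  have runner_d: "{u, v} \<inter> runner d = {u}" "{u', v'} \<inter> runner d = {k}"
    using du dv k J1_facts(1) unfolding k(1)[symmetric] by auto
  have runner_d': "{u, v} \<inter> runner d' = {v}" "{u', v'} \<inter> runner d' = {k'}"
    using du dv k J1_facts(1) unfolding k(1)[symmetric] by auto
  note move_d = single_runner_move[OF J1_facts(2,3) runner_d]
  have move_d': "beads_above (fMu d') w + (if w < ph k' then 1 else 0)
      = beads_above (fLa d') w + (if w < ph v then 1 else 0)" for w
    using single_runner_move[OF J1_facts(4,5) runner_d', of w] by simp
  note hook_d = single_bead_move_hook[OF component_partitions(1) component_partitions(2) J1_facts(6)
      move_d ne(1) row_bound_La[OF kin(1), unfolded k(2)] row_bound_Mu[OF _, of u, unfolded du]]
  note hook_d' = single_bead_move_hook[OF component_partitions(2) component_partitions(1) J1_facts(7)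
      move_d' ne(2) row_bound_Mu[OF _, of v, unfolded dv] row_bound_La[OF kin(2), unfolded k(3)]]
  show "beta_vec (rb d) (sl d) (Mu d) (head_row (diagram (La d) - diagram (Mu d))) = ph u"
    "beta_vec (rb d) (sl d) (La d) (tail_row (diagram (La d) - diagram (Mu d))) = ph k"
    "int (card (diagram (La d) - diagram (Mu d))) = ph k - ph u"
    using hook_d moved(1) by auto
  show "beta_vec (rb d') (sl d') (La d') (head_row (diagram (Mu d') - diagram (La d'))) = ph k'"
    "beta_vec (rb d') (sl d') (Mu d') (tail_row (diagram (Mu d') - diagram (La d'))) = ph v"
    using hook_d' moved(1) by auto
  show "ph k - ph u = ph v - ph k'" using hook_d(3) hook_d'(3) J1_facts(8) moved(1) by auto
qed

end


context
  fixes d :: nat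
  assumes J2: "J2 l La Mu d"
begin

lemma J2_facts:
  "1 \<le> d" "d \<le> l" "\<And>b. 1 \<le> b \<Longrightarrow> b \<le> l \<Longrightarrow> b \<noteq> d \<Longrightarrow> La b = Mu b"
  "card (diagram (La d) - diagram (Mu d)) = card (diagram (Mu d) - diagram (La d))"
  "diagram (La d) - diagram (Mu d) \<noteq> {}"
proof -
  have eq: "diagram (La d) - (diagram (La d) \<inter> diagram (Mu d)) = diagram (La d) - diagram (Mu d)"
    "diagram (Mu d) - (diagram (La d) \<inter> diagram (Mu d)) = diagram (Mu d) - diagram (La d)" by blast+
  show "1 \<le> d" "d \<le> l" "\<And>b. 1 \<le> b \<Longrightarrow> b \<le> l \<Longrightarrow> b \<noteq> d \<Longrightarrow> La b = Mu b"
    "card (diagram (La d) - diagram (Mu d)) = card (diagram (Mu d) - diagram (La d))"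
    "diagram (La d) - diagram (Mu d) \<noteq> {}"
    using J2 unfolding J2_def ribbon_def eq by auto
qed

lemma J2_runners: "dd u = d" "dd v = d" "dd u' = d" "dd v' = d"
proof -
  have "dd k = d" if "k \<in> {u, v}" for k
    using J2_facts(3)[OF d_of_range, of k] unchanged_component_avoids[OF d_of_range, of k] that by auto
  then show "dd u = d" "dd v = d" "dd u' = d" "dd v' = d" using moved_runners by auto
qed

lemma J2_phi_order: "ph u < ph u'" "ph u' < ph v'" "ph v' < ph v"
  using phi_strict_mono_on_runner[OF n l] J2_runners order by simp_all

abbreviation "N \<equiv> \<lambda>i. min (part (La d) i) (part (Mu d) i)"
abbreviation "fN \<equiv> beta_seq (sl d) N"

lemma partition_fun_meet: "partition_fun N"
  by (rule partition_fun_min[OF partition_fun_part partition_fun_part]) (rule component_partitions)+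

lemma J2_moves:
  "beads_above (fLa d) w = beads_above fN w + (if ph u \<le> w \<and> w < ph u' then 1 else 0)"
  "beads_above (fMu d) w = beads_above fN w + (if ph v' \<le> w \<and> w < ph v then 1 else 0)"
proof -
  note ord = J2_phi_order
  have "{u, v} \<inter> runner d = {u, v}" "{u', v'} \<inter> runner d = {u', v'}" using J2_runners by auto
  then have rel: "beads_above (fLa d) w + card {z \<in> {ph u, ph v}. w < z}
      = beads_above (fMu d) w + card {z \<in> {ph u', ph v'}. w < z}"
    using runner_relation[OF J2_facts(1,2), of w] by simp
  have rel': "beads_above (fLa d) w + (if w < ph u then 1 else 0) + (if w < ph v then 1 else 0)
      = beads_above (fMu d) w + (if w < ph u' then 1 else 0) + (if w < ph v' then 1 else 0)"
    using rel card_above_doubleton[of "ph u" "ph v" w] card_above_doubleton[of "ph u'" "ph v'" w] ord by simp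
  have cN: "beads_above fN w = min (beads_above (fLa d) w) (beads_above (fMu d) w)"
    unfolding beta_seq_min by (rule beads_above_min[OF strict_antimono_fLa strict_antimono_fMu])
  have ord4: "ph u < ph u'" "ph u' < ph v" "ph u < ph v'" "ph v' < ph v" using ord by simp_all
  show "beads_above (fLa d) w = beads_above fN w + (if ph u \<le> w \<and> w < ph u' then 1 else 0)"
    using beads_above_min_split(1)[where cP = "beads_above (fLa d)" and cQ = "beads_above (fMu d)"
        and cN = "beads_above fN", OF rel' cN ord4] ord by (simp add: min_def)
  show "beads_above (fMu d) w = beads_above fN w + (if ph v' \<le> w \<and> w < ph v then 1 else 0)"
    using beads_above_min_split(2)[where cP = "beads_above (fLa d)" and cQ = "beads_above (fMu d)"
        and cN = "beads_above fN ", OF rel' cN ord4] ord by (simp add: max_def)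
qed

lemma J2_meet_hooks:
  "tail_row (diagram (La d) - diagram (Mu d)) = beads_above (fLa d) (ph u') + 1"
  "head_row (diagram (La d) - diagram (Mu d)) = beads_above fN (ph u) + 1"
  "tail_row (diagram (Mu d) - diagram (La d)) = beads_above (fMu d) (ph v) + 1"
  "head_row (diagram (Mu d) - diagram (La d)) = beads_above fN (ph v') + 1"
  "int (card (diagram (La d) - diagram (Mu d))) = ph u' - ph u"
  "int (card (diagram (Mu d) - diagram (La d))) = ph v - ph v'"
  "(i, j) \<in> diagram (La d) - diagram (Mu d) \<Longrightarrow> beads_above (fLa d) (ph u') + 1 \<le> i"
  "(i, j) \<in> diagram (Mu d) - diagram (La d) \<Longrightarrow> i \<le> beads_above fN (ph v') + 1"
proof -
  have rho: "diagram (La d) - diagram (Mu d) = diagram_fun (part (La d)) - diagram_fun N"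
    "diagram (Mu d) - diagram (La d) = diagram_fun (part (Mu d)) - diagram_fun N"
    unfolding diagram_eq_diagram_fun diagram_fun_Int[symmetric] by blast+
  note L = bead_move_skew_diagram[OF partition_fun_part[OF component_partitions(1)] partition_fun_meet
      J2_moves(1) J2_phi_order(1), folded rho]
  note M = bead_move_skew_diagram[OF partition_fun_part[OF component_partitions(2)] partition_fun_meet
      J2_moves(2) J2_phi_order(3), folded rho]
  show "tail_row (diagram (La d) - diagram (Mu d)) = beads_above (fLa d) (ph u') + 1"
    "head_row (diagram (La d) - diagram (Mu d)) = beads_above fN (ph u) + 1"
    "tail_row (diagram (Mu d) - diagram (La d)) = beads_above (fMu d) (ph v) + 1"
    "head_row (diagram (Mu d) - diagram (La d)) = beads_above fN (ph v') + 1"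
    "int (card (diagram (La d) - diagram (Mu d))) = ph u' - ph u"
    "int (card (diagram (Mu d) - diagram (La d))) = ph v - ph v'"
    by (fact L(1-3) M(1-3))+
  show "(i, j) \<in> diagram (La d) - diagram (Mu d) \<Longrightarrow> beads_above (fLa d) (ph u') + 1 \<le> i"
    "(i, j) \<in> diagram (Mu d) - diagram (La d) \<Longrightarrow> i \<le> beads_above fN (ph v') + 1"
    using L(4)[of i j] M(4)[of i j] by simp_all
qed

lemma J2_hooks_separated: "beads_above fN (ph v') < beads_above (fLa d) (ph u')"
proof -
  have sN: "strict_antimono_on {1..} fN" by (rule strict_antimono_beta_seq[OF partition_fun_meet])
  have "beads_above fN (ph v' - 1) = beads_above fN (ph v') + 1"
    using beads_above_at(2)[OF sN, of "beads_above fN (ph v') + 1"]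
      bead_move_positions(2)[OF strict_antimono_fMu sN J2_moves(2) J2_phi_order(3)]
    by simp
  moreover have "beads_above fN (ph v' - 1) \<le> beads_above fN (ph u')"
    by (rule beads_above_antimono[OF sN]) (use J2_phi_order in simp)
  ultimately show ?thesis using J2_moves(1)[of "ph u'"] by simp
qed

lemma J2_dom_lt: "dom_lt (La d) (Mu d)"
proof -
  have "dom_le (La d) (Mu d)"
  proof (rule dom_le_if_rows_separated)
    show "beads_above fN (ph v') + 1 < i" if "(i, j) \<in> diagram (La d) - diagram (Mu d)" for i j
      using J2_meet_hooks(7)[OF that] J2_hooks_separated by simp
    show "i \<le> beads_above fN (ph v') + 1" if "(i, j) \<in> diagram (Mu d) - diagram (La d)" for i j
      by (rule J2_meet_hooks(8)[OF that])
  qed (rule J2_facts(4))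
  moreover have "La d \<noteq> Mu d" using J2_facts(5) by auto
  ultimately show ?thesis unfolding dom_lt_def by simp
qed

lemma J2_hooks:
  "beta_vec (rb d) (sl d) (Mu d) (head_row (diagram (La d) - diagram (Mu d))) = ph u"
  "beta_vec (rb d) (sl d) (La d) (tail_row (diagram (La d) - diagram (Mu d))) = ph u'"
  "beta_vec (rb d) (sl d) (La d) (head_row (diagram (Mu d) - diagram (La d))) = ph v'"
  "beta_vec (rb d) (sl d) (Mu d) (tail_row (diagram (Mu d) - diagram (La d))) = ph v"
  "int (card (diagram (La d) - diagram (Mu d))) = ph u' - ph u"
  "ph u' - ph u = ph v - ph v'"
proof -
  note ord = J2_phi_order
  have sN: "strict_antimono_on {1..} fN" by (rule strict_antimono_beta_seq[OF partition_fun_meet])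
  note L = bead_move_positions[OF strict_antimono_fLa sN J2_moves(1) ord(1)]
  note M = bead_move_positions[OF strict_antimono_fMu sN J2_moves(2) ord(3)]
  note sep = J2_hooks_separated
  have "beads_above (fMu d) (ph u) = beads_above fN (ph u)" "beads_above (fLa d) (ph v') = beads_above fN (ph v')"
    using J2_moves(2)[of "ph u"] J2_moves(1)[of "ph v'"] ord by simp_all
  then have bounds: "beads_above fN (ph u) < rb d" "beads_above (fLa d) (ph u') < rb d"
    "beads_above fN (ph v') < rb d" "beads_above (fMu d) (ph v) < rb d"
    using row_bound_Mu[of u] row_bound_La[of u'] row_bound_La[of v'] row_bound_Mu[of v] moved J2_runners
    by simp_all
  have "fMu d (beads_above fN (ph u) + 1) = ph u" using M(5)[of "beads_above fN (ph u) + 1"] L(2,3) sep by simp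
  then show "beta_vec (rb d) (sl d) (Mu d) (head_row (diagram (La d) - diagram (Mu d))) = ph u"
    unfolding J2_meet_hooks(2) using bounds(1) by (simp add: beta_vec_eq_beta_seq)
  show "beta_vec (rb d) (sl d) (La d) (tail_row (diagram (La d) - diagram (Mu d))) = ph u'"
    unfolding J2_meet_hooks(1) using bounds(2) L(1) by (simp add: beta_vec_eq_beta_seq)
  have "fLa d (beads_above fN (ph v') + 1) = ph v'" using L(5)[of "beads_above fN (ph v') + 1"] M(2) sep by simp
  then show "beta_vec (rb d) (sl d) (La d) (head_row (diagram (Mu d) - diagram (La d))) = ph v'"
    unfolding J2_meet_hooks(4) using bounds(3) by (simp add: beta_vec_eq_beta_seq)
  show "beta_vec (rb d) (sl d) (Mu d) (tail_row (diagram (Mu d) - diagram (La d))) = ph v"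
    unfolding J2_meet_hooks(3) using bounds(4) M(1) by (simp add: beta_vec_eq_beta_seq)
  show "int (card (diagram (La d) - diagram (Mu d))) = ph u' - ph u" by (rule J2_meet_hooks(5))
  show "ph u' - ph u = ph v - ph v'" using J2_meet_hooks(5,6) J2_facts(4) by simp
qed

end

end

lemma Diff_Int_absorb: "A - (A \<inter> B) = A - B" "A - (B \<inter> A) = A - B"
  by blast+

lemma multipart_is_partition: "multipart l m La \<Longrightarrow> is_partition (La b)"
  unfolding multipart_def using is_partition_Nil by (cases "1 \<le> b \<and> b \<le> l") auto

lemma skew_ribbon_rows:
  assumes la: "is_partition la" and mu: "is_partition mu" and rib: "ribbon (diagram la - diagram mu)"
  shows "head_row (diagram la - diagram mu) \<in> {1..length la}"
    "tail_row (diagram la - diagram mu) \<in> {1..length la}"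
proof -
  have S: "diagram la - diagram mu = diagram_fun (part la) - diagram_fun (part mu)"
    by (simp add: diagram_eq_diagram_fun)
  have "finite (diagram la - diagram mu)" using finite_diagram[of la] by simp
  note mem = ribbon_head_tail_mem[OF partition_fun_part[OF la] partition_fun_part[OF mu],
      folded S, OF rib this]
  show "head_row (diagram la - diagram mu) \<in> {1..length la}"
    "tail_row (diagram la - diagram mu) \<in> {1..length la}"
    using mem diagram_rows unfolding head_row_def tail_row_def by (metis DiffD1 atLeastAtMost_iff prod.collapse)+
qed

lemma Hcond_runner_exchange:
  fixes n l m r :: nat and sl :: "nat \<Rightarrow> int" and La Mu :: "nat \<Rightarrow> nat list" and la mu :: "nat list"
  defines "\<alpha> \<equiv> beta_vec r (total_charge l sl) la" and "\<beta> \<equiv> beta_vec r (total_charge l sl) mu"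
    and "\<theta> \<equiv> diagram la - diagram mu" and "\<theta>' \<equiv> diagram mu - diagram la"
  defines "h \<equiv> card \<theta>" and "x \<equiv> head_row \<theta>" and "x' \<equiv> tail_row \<theta>"
    and "y \<equiv> tail_row \<theta>'" and "y' \<equiv> head_row \<theta>'"
  assumes n: "1 \<le> n" and l: "1 \<le> l" and H: "Hcond n l m sl La Mu la mu r"
    and ribbons: "ribbon \<theta>" "ribbon \<theta>'"
    and same: "{\<alpha> i | i. i \<in> {1..r} \<and> i \<noteq> x' \<and> i \<noteq> y'} = {\<beta> j | j. j \<in> {1..r} \<and> j \<noteq> x \<and> j \<noteq> y}"
    and shifted: "\<alpha> y' = \<beta> y - int h" "\<alpha> x' = \<beta> x + int h"
  shows "runner_exchange n l sl r La Mu la mu (\<beta> x) (\<beta> y) (\<beta> x + int h) (\<beta> y - int h)"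
proof -
  from H have la: "is_partition la" "psize la = r" and mu: "is_partition mu" "psize mu = r"
    and corr: "corr n l sl La la" "corr n l sl Mu mu"
    and common: "card (Bset (total_charge l sl) la \<inter> Bset (total_charge l sl) mu) = r - 2"
    and multi: "multipart l m La" "multipart l m Mu" and prec: "mprec n l sl La Mu"
    unfolding Hcond_def by simp_all
  have components: "\<And>b. is_partition (La b)" "\<And>b. is_partition (Mu b)"
    using multipart_is_partition[OF multi(1)] multipart_is_partition[OF multi(2)] by simp_all
  have dom: "dom_le la mu" using prec la(1) mu(1) corr unfolding mprec_def dom_lt_def by blast
  let ?F = "beta_seq (total_charge l sl) (part la)" and ?G = "beta_seq (total_charge l sl) (part mu)"
  have "length la \<le> r" "length mu \<le> r"
    using length_le_psize[OF la(1)] length_le_psize[OF mu(1)] la mu by simp_all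
  then have rows: "x \<in> {1..r}" "x' \<in> {1..r}" "y \<in> {1..r}" "y' \<in> {1..r}"
    using skew_ribbon_rows[OF la(1) mu(1)] skew_ribbon_rows[OF mu(1) la(1)] ribbons
    unfolding x_def x'_def y_def y'_def \<theta>_def \<theta>'_def by auto
  have \<alpha>\<beta>: "\<alpha> i = ?F i" "\<beta> i = ?G i" if "i \<in> {1..r}" for i
    using that unfolding \<alpha>_def \<beta>_def by (simp_all add: beta_vec_eq_beta_seq)
  have "\<theta> \<noteq> {}" "finite \<theta>" using ribbons(1) finite_diagram[of la] unfolding ribbon_def \<theta>_def by auto
  then have h: "0 < int h" unfolding h_def by (simp add: card_gt_0_iff)
  have "{\<alpha> i | i. i \<in> {1..r} \<and> i \<noteq> x' \<and> i \<noteq> y'} = \<alpha> ` ({1..r} - {x', y'})"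
    "{\<beta> j | j. j \<in> {1..r} \<and> j \<noteq> x \<and> j \<noteq> y} = \<beta> ` ({1..r} - {x, y})" by auto
  moreover have "\<alpha> ` ({1..r} - {x', y'}) = ?F ` ({1..r} - {x', y'})"
    "\<beta> ` ({1..r} - {x, y}) = ?G ` ({1..r} - {x, y})" using \<alpha>\<beta> by (auto intro: image_cong)
  ultimately have "?F ` ({1..r} - {x', y'}) = ?G ` ({1..r} - {x, y})" using same by simp
  then interpret E: two_bead_exchange "total_charge l sl" r la mu "?G x" "?G y" "?F x'" "?F y'"
    using two_bead_exchange_of_common_rows[OF la mu common] rows by blast
  have shifted': "?F x' = ?G x + int h" "?F y' = ?G y - int h"
    using shifted \<alpha>\<beta> rows by simp_all
  have order: "?G x < ?F x'" "?F x' < ?F y'" "?F y' < ?G y"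
    using E.shifted_exchange_order[OF dom h shifted'] by (simp_all add: x'_def \<theta>_def)
  have eqs: "\<beta> x = ?G x" "\<beta> y = ?G y" using \<alpha>\<beta> rows by simp_all
  show ?thesis
    unfolding eqs shifted'[symmetric]
    using E.two_bead_exchange_axioms n l components corr order
    by (simp add: runner_exchange_def runner_exchange_axioms_def)
qed

theorem mainTheorem8:
  fixes n l m r d d' :: nat and sl :: "nat \<Rightarrow> int"
    and La Mu :: "nat \<Rightarrow> nat list" and la mu :: "nat list"
  defines "s \<equiv> total_charge l sl"
  defines "\<alpha> \<equiv> beta_vec r s la"
  defines "\<beta> \<equiv> beta_vec r s mu"
  defines "\<theta> \<equiv> diagram la - (diagram la \<inter> diagram mu)"
  defines "\<theta>' \<equiv> diagram mu - (diagram la \<inter> diagram mu)"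
  defines "h \<equiv> card \<theta>"
  defines "y \<equiv> tail_row \<theta>'" and "y' \<equiv> head_row \<theta>'"
  defines "x' \<equiv> tail_row \<theta>" and "x \<equiv> head_row \<theta>"
  defines "rb \<equiv> (\<lambda>b. card {i \<in> {1..r}. d_of n l (\<alpha> i) = b})"
  assumes n: "1 \<le> n" and l: "1 \<le> l" and m: "1 \<le> m"
  assumes H: "Hcond n l m sl La Mu la mu r"
  \<comment> \<open>the facts recorded under (H) in the paper\<close>
  assumes ribbons: "ribbon \<theta>" "ribbon \<theta>'" "card \<theta>' = h"
  assumes alphabeta: "{\<alpha> i | i. i \<in> {1..r} \<and> i \<noteq> x' \<and> i \<noteq> y'} = {\<beta> j | j. j \<in> {1..r} \<and> j \<noteq> x \<and> j \<noteq> y}"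
    "\<alpha> y' = \<beta> y - int h" "\<alpha> x' = \<beta> x + int h"
  assumes J: "J1 l La Mu d d' \<or> (J2 l La Mu d \<and> d' = d)"
  shows
    "({d_of n l (\<beta> x), d_of n l (\<beta> y)} = {d_of n l (\<beta> x + int h), d_of n l (\<beta> y - int h)} \<and>
      {d_of n l (\<beta> x + int h), d_of n l (\<beta> y - int h)} = {d, d'} \<and>
      (\<forall>b\<in>{1..l}. card {i \<in> {1..r}. d_of n l (\<alpha> i) = b} = card {i \<in> {1..r}. d_of n l (\<beta> i) = b}))
   \<and> (J1 l La Mu d d' \<longrightarrow>
       (let g = beta_vec (rb d) (sl d) (La d); e = beta_vec (rb d) (sl d) (Mu d);
            g' = beta_vec (rb d') (sl d') (La d'); e' = beta_vec (rb d') (sl d') (Mu d');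
            \<rho> = diagram (La d) - diagram (Mu d); \<rho>' = diagram (Mu d') - diagram (La d');
            b0 = tail_row \<rho>; c0 = head_row \<rho>; b0' = tail_row \<rho>'; c0' = head_row \<rho>';
            hh = int (card \<rho>)
        in d_of n l (\<beta> x) = d \<and> d_of n l (\<beta> y) = d' \<and>
           (\<forall>k k'. {k, k'} = {\<beta> x + int h, \<beta> y - int h} \<and> d_of n l k = d \<and> d_of n l k' = d' \<longrightarrow>
              e c0 = phi n l (\<beta> x) \<and> g b0 = phi n l k \<and> g' c0' = phi n l k' \<and>
              e' b0' = phi n l (\<beta> y) \<and>
              hh = phi n l k - phi n l (\<beta> x) \<and> phi n l k - phi n l (\<beta> x) = phi n l (\<beta> y) - phi n l k')))
   \<and> (J2 l La Mu d \<longrightarrow>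
       (let g = beta_vec (rb d) (sl d) (La d); e = beta_vec (rb d) (sl d) (Mu d);
            \<rho> = diagram (La d) - (diagram (La d) \<inter> diagram (Mu d));
            \<rho>' = diagram (Mu d) - (diagram (La d) \<inter> diagram (Mu d));
            b0 = tail_row \<rho>; c0 = head_row \<rho>; b0' = tail_row \<rho>'; c0' = head_row \<rho>';
            hh = int (card \<rho>)
        in dom_lt (La d) (Mu d) \<and>
           e c0 = phi n l (\<beta> x) \<and> g b0 = phi n l (\<beta> x + int h) \<and>
           g c0' = phi n l (\<beta> y - int h) \<and> e b0' = phi n l (\<beta> y) \<and>
           hh = phi n l (\<beta> x + int h) - phi n l (\<beta> x) \<and>
           phi n l (\<beta> x + int h) - phi n l (\<beta> x) = phi n l (\<beta> y) - phi n l (\<beta> y - int h)))"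
proof -
  interpret R: runner_exchange n l sl r La Mu la mu "\<beta> x" "\<beta> y" "\<beta> x + int h" "\<beta> y - int h"
    using Hcond_runner_exchange[OF n l H] ribbons(1,2) alphabeta
    unfolding s_def \<alpha>_def \<beta>_def h_def x_def x'_def y_def y'_def \<theta>_def \<theta>'_def Diff_Int_absorb
    by blast
  have rb: "rb = R.rb" unfolding rb_def \<alpha>_def s_def ..
  show ?thesis (is "?part1 \<and> ?part2 \<and> ?part3")
  proof (intro conjI[of ?part1] conjI[of ?part2])
    have "{d_of n l (\<beta> x + int h), d_of n l (\<beta> y - int h)} = {d, d'}"
      using J R.J1_runners R.moved_runners R.J2_runners by auto
    then show ?part1
      using R.moved_runners R.runner_counts_eq unfolding \<alpha>_def \<beta>_def s_def by simp
    show ?part2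
      unfolding Let_def rb
      by (intro impI conjI allI; (elim conjE)?; (erule R.J1_moved_runners R.J1_hooks; assumption))
    show ?part3
      unfolding Let_def rb Diff_Int_absorb by (intro impI conjI; erule R.J2_dom_lt R.J2_hooks)
  qed
qed

end
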